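(* Let $G=(V,E,H)$ be a HEDG, let $(\mathcal{X}_v)_{v\in V}$ be standard Borel spaces and let $\mathbb{P}_V$ be a probability distribution on $\mathcal{X}_V=\prod_{v\in V}\mathcal{X}_v$. If $(G,\mathbb{P}_V)$ satisfies the component-wisely solvable structural equations property (csSEP), then $(G,\mathbb{P}_V)$ satisfies the strong marginal general directed global Markov property (smgdGMP).
   Context: A HEDG (directed graph with hyperedges) is a triple $G=(V,E,H)$: $V$ a finite set, $E\subseteq V\times V$ a set of directed edges $v\to w$ (self-loops allowed), and $H$ a simplicial complex on $V$ (a set of subsets of $V$ containing all singletons and closed under taking subsets); $\tilde H$ denotes the set of inclusion-maximal elements of $H$. $\mathrm{Pa}^G(v)=\{u:(u,v)\in E\}$; for $S\subseteq V$, $\mathrm{Pa}^G(S)=\bigcup_{v\in S}\mathrm{Pa}^G(v)$. $\mathrm{Anc}^G(v)$ (resp. $\mathrm{Desc}^G(v)$) is the set of nodes with a directed path to (resp. from) $v$, including $v$ itself; $\mathrm{Sc}^G(v)=\mathrm{Anc}^G(v)\cap\mathrm{Desc}^G(v)$ is the strongly connected component of $v$. For $S\subseteq V$ and standard Borel spaces $\mathcal{E}_F$ ($F\in\tilde H$) write $\mathcal{E}_S=\prod_{F\in\tilde H,\,F\cap S\neq\emptyset}\mathcal{E}_F$, $\mathcal{E}_v=\prod_{F\in\tilde H,\,v\in F}\mathcal{E}_F$, and similarly $E_S,E_v$ for tuples of random variables; $\mathcal{X}_A=\prod_{v\in A}\mathcal{X}_v$. csSEP: there exist a probability space $(\Omega,\mathfrak{A},\mathbb{P})$,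 jointly independent random variables $E_F:\Omega\to\mathcal{E}_F$ ($F\in\tilde H$) with values in standard Borel spaces, measurable $f_v:\mathcal{X}_{\mathrm{Pa}^G(v)}\times\mathcal{E}_v\to\mathcal{X}_v$, random variables $X_v:\Omega\to\mathcal{X}_v$ with $X_v=f_v(X_{\mathrm{Pa}^G(v)},E_v)$ a.s. for all $v$ and joint law of $(X_v)_{v\in V}$ equal to $\mathbb{P}_V$, and measurable $\tilde g_v:\mathcal{X}_{\mathrm{Pa}^G(\mathrm{Sc}^G(v))\setminus\mathrm{Sc}^G(v)}\times\mathcal{E}_{\mathrm{Sc}^G(v)}\to\mathcal{X}_v$ with $X_v=\tilde g_v(X_{\mathrm{Pa}^G(\mathrm{Sc}^G(v))\setminus\mathrm{Sc}^G(v)},E_{\mathrm{Sc}^G(v)})$ a.s. for all $v\in V$. Acyclic augmentation $G^{\mathrm{acag}}$: the directed acyclic graph with node set $V^{\mathrm{aug}}=V\cup\{e_F:F\in\tilde H\}$ and edges: $v\to w$ for $v,w\in V$ iff $v\notin\mathrm{Sc}^G(w)$ and there is $w'\in\mathrm{Sc}^G(w)$ with $(v,w')\in E$; and $e_F\to w$ iff $\mathrm{Sc}^G(w)\cap F\neq\emptyset$. d-separation in a directed graph $D$: a path (sequence of nodes, repetitions allowed, consecutive nodes joined by an edge in either direction) is blocked by $Z$ if an endnode lies in $Z$, or some intermediate node is a collider ($\to v_i\leftarrow$) not in $\mathrm{Anc}^D(Z)$, or some intermediate non-collider lies in $Z$; $X\perp^d_D Y\mid Z$ if every path from $X$ to $Y$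 is blocked by $Z$. smgdGMP: there exist standard Borel spaces $\mathcal{E}_F$ ($F\in\tilde H$) and a probability distribution $\mathbb{P}_{V^{\mathrm{aug}}}$ on $\mathcal{X}_V\times\prod_{F\in\tilde H}\mathcal{E}_F$ (coordinate $e_F$ taking values in $\mathcal{E}_F$) whose marginal on $\mathcal{X}_V$ is $\mathbb{P}_V$, such that for all $X,Y,Z\subseteq V^{\mathrm{aug}}$: $X\perp^d_{G^{\mathrm{acag}}}Y\mid Z$ implies that the coordinate tuples indexed by $X$ and $Y$ are conditionally independent given those indexed by $Z$ under $\mathbb{P}_{V^{\mathrm{aug}}}$. *)

theory Defs
  imports "HOL-Analysis.Analysis" "HOL-Probability.Probability"
begin

definition polish_topology :: "'a topology \<Rightarrow> bool" where
  "polish_topology X \<longleftrightarrow> completely_metrizable_space X \<and> separable_space X"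

definition borel_of_topology :: "'a topology \<Rightarrow> 'a measure" where
  "borel_of_topology X = sigma (topspace X) {U. openin X U}"

definition standard_borel :: "'a measure \<Rightarrow> bool" where
  "standard_borel M \<longleftrightarrow>
     (\<exists>X. polish_topology X \<and> topspace X = space M \<and> sets M = sets (borel_of_topology X))"

definition simplicial_complex :: "'v set \<Rightarrow> 'v set set \<Rightarrow> bool" where
  "simplicial_complex V H \<longleftrightarrow>
     (\<forall>S\<in>H. S \<subseteq> V) \<and> (\<forall>v\<in>V. {v} \<in> H) \<and> (\<forall>S\<in>H. \<forall>T. T \<subseteq> S \<longrightarrow> T \<in> H)"

definition HEDG :: "'v set \<Rightarrow> ('v \<times> 'v) set \<Rightarrow> 'v set set \<Rightarrow> bool" where
  "HEDG V E H \<longleftrightarrow> finite V \<and> E \<subseteq> V \<times> V \<and> simplicial_complex V H"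

definition maxfaces :: "'v set set \<Rightarrow> 'v set set" where
  "maxfaces H = {F \<in> H. \<forall>F'\<in>H. F \<subseteq> F' \<longrightarrow> F' = F}"

definition parents :: "('v \<times> 'v) set \<Rightarrow> 'v \<Rightarrow> 'v set" where
  "parents E v = {u. (u, v) \<in> E}"

definition parents_set :: "('v \<times> 'v) set \<Rightarrow> 'v set \<Rightarrow> 'v set" where
  "parents_set E S = (\<Union>v\<in>S. parents E v)"

definition anc :: "('v \<times> 'v) set \<Rightarrow> 'v \<Rightarrow> 'v set" where
  "anc E v = {u. (u, v) \<in> E\<^sup>*}"

definition desc :: "('v \<times> 'v) set \<Rightarrow> 'v \<Rightarrow> 'v set" where
  "desc E v = {w. (v, w) \<in> E\<^sup>*}"

definition scc :: "('v \<times> 'v) set \<Rightarrow> 'v \<Rightarrow> 'v set" where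
  "scc E v = anc E v \<inter> desc E v"

text \<open>Maximal hyperedges meeting a set S (E_S is indexed by these; E_v by those meeting {v}).\<close>
definition faces_meeting :: "'v set set \<Rightarrow> 'v set \<Rightarrow> 'v set set" where
  "faces_meeting H S = {F \<in> maxfaces H. F \<inter> S \<noteq> {}}"

text \<open>Nodes of the augmentation: Inl v for v in V, Inr F standing for e_F.\<close>
definition aug_nodes :: "'v set \<Rightarrow> 'v set set \<Rightarrow> ('v + 'v set) set" where
  "aug_nodes V H = Inl ` V \<union> Inr ` maxfaces H"

definition acag :: "'v set \<Rightarrow> ('v \<times> 'v) set \<Rightarrow> 'v set set \<Rightarrow> (('v + 'v set) \<times> ('v + 'v set)) set" where
  "acag V E H =
     {(Inl v, Inl w) | v w. v \<in> V \<and> w \<in> V \<and> v \<notin> scc E w \<and> (\<exists>w'\<in>scc E w. (v, w') \<in> E)}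
   \<union> {(Inr F, Inl w) | F w. F \<in> maxfaces H \<and> w \<in> V \<and> scc E w \<inter> F \<noteq> {}}"

text \<open>A path: nonempty node sequence (repetitions allowed), consecutive nodes joined by an
  edge in either direction.\<close>
definition is_path :: "('n \<times> 'n) set \<Rightarrow> 'n list \<Rightarrow> bool" where
  "is_path D p \<longleftrightarrow> p \<noteq> [] \<and>
     (\<forall>i. Suc i < length p \<longrightarrow> (p ! i, p ! Suc i) \<in> D \<or> (p ! Suc i, p ! i) \<in> D)"

definition is_collider :: "('n \<times> 'n) set \<Rightarrow> 'n list \<Rightarrow> nat \<Rightarrow> bool" where
  "is_collider D p i \<longleftrightarrow> (p ! (i - 1), p ! i) \<in> D \<and> (p ! (i + 1), p ! i) \<in> D"

definition ancestors_of :: "('n \<times> 'n) set \<Rightarrow> 'n set \<Rightarrow> 'n set" where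
  "ancestors_of D Z = {u. \<exists>z\<in>Z. (u, z) \<in> D\<^sup>*}"

definition blocked :: "('n \<times> 'n) set \<Rightarrow> 'n set \<Rightarrow> 'n list \<Rightarrow> bool" where
  "blocked D Z p \<longleftrightarrow> hd p \<in> Z \<or> last p \<in> Z \<or>
     (\<exists>i. 0 < i \<and> i + 1 < length p \<and>
        ((is_collider D p i \<and> p ! i \<notin> ancestors_of D Z) \<or>
         (\<not> is_collider D p i \<and> p ! i \<in> Z)))"

definition d_separated :: "('n \<times> 'n) set \<Rightarrow> 'n set \<Rightarrow> 'n set \<Rightarrow> 'n set \<Rightarrow> bool" where
  "d_separated D X Y Z \<longleftrightarrow>
     (\<forall>p. is_path D p \<and> hd p \<in> X \<and> last p \<in> Y \<longrightarrow> blocked D Z p)"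

definition cond_indep :: "'a measure \<Rightarrow> 'a measure \<Rightarrow> 'a measure \<Rightarrow> 'a measure \<Rightarrow> bool" where
  "cond_indep Q A B C \<longleftrightarrow>
     (\<forall>a\<in>sets A. \<forall>b\<in>sets B. AE \<omega> in Q.
        real_cond_exp Q C (indicator (a \<inter> b)) \<omega> =
        real_cond_exp Q C (indicator a) \<omega> * real_cond_exp Q C (indicator b) \<omega>)"

definition aug_space :: "'v set \<Rightarrow> 'v set set \<Rightarrow> ('v \<Rightarrow> 'x measure) \<Rightarrow> ('v set \<Rightarrow> real measure)
    \<Rightarrow> (('v \<Rightarrow> 'x) \<times> ('v set \<Rightarrow> real)) measure" where
  "aug_space V H M N = (\<Pi>\<^sub>M v\<in>V. M v) \<Otimes>\<^sub>M (\<Pi>\<^sub>M F\<in>maxfaces H. N F)"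

definition coord_proj :: "('v + 'v set) set \<Rightarrow> ('v \<Rightarrow> 'x) \<times> ('v set \<Rightarrow> real)
    \<Rightarrow> ('v \<Rightarrow> 'x) \<times> ('v set \<Rightarrow> real)" where
  "coord_proj S \<omega> = (restrict (fst \<omega>) {v. Inl v \<in> S}, restrict (snd \<omega>) {F. Inr F \<in> S})"

definition coord_alg :: "('v \<Rightarrow> 'x measure) \<Rightarrow> ('v set \<Rightarrow> real measure)
    \<Rightarrow> (('v \<Rightarrow> 'x) \<times> ('v set \<Rightarrow> real)) measure \<Rightarrow> ('v + 'v set) set
    \<Rightarrow> (('v \<Rightarrow> 'x) \<times> ('v set \<Rightarrow> real)) measure" where
  "coord_alg M N Q S = vimage_algebra (space Q) (coord_proj S)
     ((\<Pi>\<^sub>M v\<in>{v. Inl v \<in> S}. M v) \<Otimes>\<^sub>M (\<Pi>\<^sub>M F\<in>{F. Inr F \<in> S}. N F))"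

text \<open>The probability space Omega lives on a type 'w which is a parameter; the noise spaces
  are standard Borel spaces with carriers in the reals (every standard Borel space is
  Borel isomorphic to such a space).\<close>
definition csSEP :: "'w itself \<Rightarrow> 'v set \<Rightarrow> ('v \<times> 'v) set \<Rightarrow> 'v set set \<Rightarrow> ('v \<Rightarrow> 'x measure)
    \<Rightarrow> ('v \<Rightarrow> 'x) measure \<Rightarrow> bool" where
  "csSEP (t::'w itself) V E H M P \<longleftrightarrow>
    (\<exists>(\<Omega>::'w measure) (N::'v set \<Rightarrow> real measure) (Ev::'v set \<Rightarrow> 'w \<Rightarrow> real) (Xr::'v \<Rightarrow> 'w \<Rightarrow> 'x)
       (f::'v \<Rightarrow> ('v \<Rightarrow> 'x) \<times> ('v set \<Rightarrow> real) \<Rightarrow> 'x)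
       (g::'v \<Rightarrow> ('v \<Rightarrow> 'x) \<times> ('v set \<Rightarrow> real) \<Rightarrow> 'x).
      prob_space \<Omega> \<and>
      (\<forall>F\<in>maxfaces H. standard_borel (N F)) \<and>
      prob_space.indep_vars \<Omega> N Ev (maxfaces H) \<and>
      (\<forall>v\<in>V. Xr v \<in> measurable \<Omega> (M v)) \<and>
      (\<forall>v\<in>V. f v \<in> measurable
          ((\<Pi>\<^sub>M u\<in>parents E v. M u) \<Otimes>\<^sub>M (\<Pi>\<^sub>M F\<in>faces_meeting H {v}. N F)) (M v)) \<and>
      (\<forall>v\<in>V. AE \<omega> in \<Omega>. Xr v \<omega> =
          f v (restrict (\<lambda>u. Xr u \<omega>) (parents E v), restrict (\<lambda>F. Ev F \<omega>) (faces_meeting H {v}))) \<and>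
      distr \<Omega> (\<Pi>\<^sub>M v\<in>V. M v) (\<lambda>\<omega>. restrict (\<lambda>v. Xr v \<omega>) V) = P \<and>
      (\<forall>v\<in>V. g v \<in> measurable
          ((\<Pi>\<^sub>M u\<in>parents_set E (scc E v) - scc E v. M u) \<Otimes>\<^sub>M
           (\<Pi>\<^sub>M F\<in>faces_meeting H (scc E v). N F)) (M v)) \<and>
      (\<forall>v\<in>V. AE \<omega> in \<Omega>. Xr v \<omega> =
          g v (restrict (\<lambda>u. Xr u \<omega>) (parents_set E (scc E v) - scc E v),
               restrict (\<lambda>F. Ev F \<omega>) (faces_meeting H (scc E v)))))"

definition smgdGMP :: "'v set \<Rightarrow> ('v \<times> 'v) set \<Rightarrow> 'v set set \<Rightarrow> ('v \<Rightarrow> 'x measure)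
    \<Rightarrow> ('v \<Rightarrow> 'x) measure \<Rightarrow> bool" where
  "smgdGMP V E H M P \<longleftrightarrow>
    (\<exists>(N::'v set \<Rightarrow> real measure) (Q::(('v \<Rightarrow> 'x) \<times> ('v set \<Rightarrow> real)) measure).
      (\<forall>F\<in>maxfaces H. standard_borel (N F)) \<and>
      prob_space Q \<and> sets Q = sets (aug_space V H M N) \<and>
      distr Q (\<Pi>\<^sub>M v\<in>V. M v) fst = P \<and>
      (\<forall>A B C. A \<subseteq> aug_nodes V H \<longrightarrow> B \<subseteq> aug_nodes V H \<longrightarrow> C \<subseteq> aug_nodes V H \<longrightarrow>
         d_separated (acag V E H) A B C \<longrightarrow>
         cond_indep Q (coord_alg M N Q A) (coord_alg M N Q B) (coord_alg M N Q C)))"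

end

theory Submission
  imports Defs
begin

(* Iterating the component-wise equations along the acyclic graph of strongly connected
   components yields a solution Y of the structural equations that holds at every sample point
   and agrees almost surely with the given one, so it still has law P_V. For such a solution the
   coordinates of an ancestral node set of the acyclic augmentation are measurable functions of
   the noise nodes it contains: a variable node is determined by its parents, and a noise node is
   independent of every ancestral set not containing it.
   If A and B are d-separated by Z, the ancestors of A, B and Z split into Z, the nodes reachable
   from A along trails that are active given Z, and the rest. Parents of the second part lie in it
   or in Z, parents of the third part likewise, and the parents of a node of Z all lie on one side.
   Adding the nodes of this ancestral set one by one in order of increasing rank, the graphoid
   rules (determinism, independent fresh noise, weak union, contraction) make the two parts
   conditionally independent given Z. Pushing forward along the joint map of variables and noise
   transfers this to the augmented product space. *)

section \<open>Conditional independence of sub-sigma-algebras\<close>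

lemma set_integral_complement:
  fixes f :: "_ \<Rightarrow> real"
  assumes f: "integrable M f" and A: "A \<in> sets M"
  shows "(\<integral>x\<in>space M - A. f x \<partial>M) = integral\<^sup>L M f - (\<integral>x\<in>A. f x \<partial>M)"
proof -
  have "(\<integral>x\<in>space M - A. f x \<partial>M) = (\<integral>x. f x - indicator A x * f x \<partial>M)"
    unfolding set_lebesgue_integral_def
    by (rule Bochner_Integration.integral_cong) (auto simp: indicator_def)
  also have "\<dots> = integral\<^sup>L M f - (\<integral>x. indicator A x * f x \<partial>M)"
    by (rule Bochner_Integration.integral_diff[OF f]) (use integrable_mult_indicator[OF A f] in simp)
  finally show ?thesis by (simp add: set_lebesgue_integral_def)
qed

lemma set_integral_eq_on_sigma_sets:
  fixes f g :: "_ \<Rightarrow> real"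
  assumes G: "Int_stable G" "G \<subseteq> sets M"
    and f: "integrable M f" and g: "integrable M g"
    and total: "integral\<^sup>L M f = integral\<^sup>L M g"
    and gen: "\<And>A. A \<in> G \<Longrightarrow> (\<integral>x\<in>A. f x \<partial>M) = (\<integral>x\<in>A. g x \<partial>M)"
    and A: "A \<in> sigma_sets (space M) G"
  shows "(\<integral>x\<in>A. f x \<partial>M) = (\<integral>x\<in>A. g x \<partial>M)"
proof -
  have GM: "sigma_sets (space M) G \<subseteq> sets M"
    using G(2) by (rule sets.sigma_sets_subset)
  have "G \<subseteq> Pow (space M)"
    using G(2) sets.sets_into_space by blast
  from G(1) this A show ?thesis
  proof (induction rule: sigma_sets_induct_disjoint)
    case (basic A)
    then show ?case by (rule gen)
  next
    case empty
    show ?case by (simp add: set_lebesgue_integral_def)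
  next
    case (compl A)
    have "A \<in> sets M" using compl(1) GM by auto
    then show ?case
      using compl(2) total by (simp add: set_integral_complement[OF f] set_integral_complement[OF g])
  next
    case (union A)
    have AM: "\<And>i. A i \<in> sets M" using union(2) GM by auto
    have disj: "\<And>i j. i \<noteq> j \<Longrightarrow> A i \<inter> A j = {}"
      using union(1) by (auto simp: disjoint_family_on_def)
    have UM: "(\<Union>i. A i) \<in> sets M" using AM by auto
    have "set_integrable M (\<Union>i. A i) f" "set_integrable M (\<Union>i. A i) g"
      unfolding set_integrable_def
      using integrable_mult_indicator[OF UM f] integrable_mult_indicator[OF UM g] by simp_all
    then show ?case
      using union(3) by (simp add: lebesgue_integral_countable_add[OF AM disj])
  qed
qed

lemma set_integral_distr_vimage:
  fixes f :: "_ \<Rightarrow> real"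
  assumes T: "T \<in> measurable M X" and B: "B \<in> sets X" and f: "f \<in> borel_measurable X"
  shows "(\<integral>x\<in>T -` B \<inter> space M. f (T x) \<partial>M) = (\<integral>y\<in>B. f y \<partial>distr M X T)"
proof -
  have "(\<integral>x\<in>T -` B \<inter> space M. f (T x) \<partial>M) = (\<integral>x. indicator B (T x) * f (T x) \<partial>M)"
    unfolding set_lebesgue_integral_def
    by (rule Bochner_Integration.integral_cong) (auto simp: indicator_def)
  also have "\<dots> = (\<integral>y. indicator B y * f y \<partial>distr M X T)"
    by (rule integral_distr[OF T, symmetric]) (use B f in measurable)
  finally show ?thesis by (simp add: set_lebesgue_integral_def)
qed

lemma real_cond_exp_cong_sets:
  "space F = space F' \<Longrightarrow> sets F = sets F' \<Longrightarrow> real_cond_exp M F f = real_cond_exp M F' f"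
  by (simp add: real_cond_exp_def nn_cond_exp_def restr_to_subalg_def subalgebra_def)

lemma cond_indep_commute:
  assumes "cond_indep M F G C"
  shows "cond_indep M G F C"
  unfolding cond_indep_def
proof (intro ballI)
  fix a b assume "a \<in> sets G" "b \<in> sets F"
  then have "AE \<omega> in M. real_cond_exp M C (indicator (b \<inter> a)) \<omega> =
      real_cond_exp M C (indicator b) \<omega> * real_cond_exp M C (indicator a) \<omega>"
    using assms unfolding cond_indep_def by blast
  then show "AE \<omega> in M. real_cond_exp M C (indicator (a \<inter> b)) \<omega> =
      real_cond_exp M C (indicator a) \<omega> * real_cond_exp M C (indicator b) \<omega>"
    by (simp add: Int_commute mult.commute)
qed

lemma cond_indep_mono_left: "sets F' \<subseteq> sets F \<Longrightarrow> cond_indep M F G C \<Longrightarrow> cond_indep M F' G C"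
  unfolding cond_indep_def by blast

context prob_space
begin

lemma sigma_finite_subalgebra_if_subalgebra: "subalgebra M F \<Longrightarrow> sigma_finite_subalgebra M F"
  by (intro finite_measure_subalgebra_is_sigma_finite)
    (simp add: finite_measure_subalgebra_def finite_measure_subalgebra_axioms_def finite_measure_axioms)

lemma integrable_indicator_real: "A \<in> sets M \<Longrightarrow> integrable M (indicator A :: _ \<Rightarrow> real)"
  by (simp add: less_top[symmetric])

lemma cond_indep_if_cond_exp_join_eq:
  assumes sF: "subalgebra M F" and sG: "subalgebra M G"
    and sC: "subalgebra M C" and sFC: "subalgebra M FC"
    and FFC: "sets F \<subseteq> sets FC" and CFC: "sets C \<subseteq> sets FC"
    and eq: "\<And>b. b \<in> sets G \<Longrightarrow>
      AE x in M. real_cond_exp M FC (indicator b) x = real_cond_exp M C (indicator b) x"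
  shows "cond_indep M F G C"
  unfolding cond_indep_def
proof (intro ballI)
  interpret C: sigma_finite_subalgebra M C using sigma_finite_subalgebra_if_subalgebra[OF sC] .
  interpret FC: sigma_finite_subalgebra M FC using sigma_finite_subalgebra_if_subalgebra[OF sFC] .
  fix a b assume a: "a \<in> sets F" and b: "b \<in> sets G"
  have aM: "a \<in> sets M" and bM: "b \<in> sets M" using a b sF sG by (auto simp: subalgebra_def)
  define ia where "ia = (indicator a :: _ \<Rightarrow> real)"
  define ib where "ib = (indicator b :: _ \<Rightarrow> real)"
  define eb where "eb = real_cond_exp M C ib"
  have ia_FC [measurable]: "ia \<in> borel_measurable FC" unfolding ia_def using a FFC by auto
  have [measurable]: "ia \<in> borel_measurable M" "ib \<in> borel_measurable M"
    unfolding ia_def ib_def using aM bM by simp_all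
  have intb: "integrable M ib" unfolding ib_def using integrable_indicator_real[OF bM] .
  have intab: "integrable M (\<lambda>x. ia x * ib x)"
    unfolding ia_def using integrable_mult_indicator[OF aM intb] by simp
  have int_eb_a: "integrable M (\<lambda>x. eb x * ia x)"
    using integrable_mult_indicator[OF aM C.real_cond_exp_int(1)[OF intb]]
    unfolding ia_def eb_def by (simp add: mult.commute)
  have "subalgebra FC C" using sC sFC CFC by (auto simp: subalgebra_def)
  then have tower: "AE x in M. real_cond_exp M C (real_cond_exp M FC (\<lambda>x. ia x * ib x)) x =
      real_cond_exp M C (\<lambda>x. ia x * ib x) x"
    by (rule C.real_cond_exp_nested_subalg[OF sFC _ intab])
  have "AE x in M. real_cond_exp M FC (\<lambda>x. ia x * ib x) x = ia x * real_cond_exp M FC ib x"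
    by (rule FC.real_cond_exp_mult) (auto simp: intab)
  then have "AE x in M. real_cond_exp M FC (\<lambda>x. ia x * ib x) x = eb x * ia x"
    using eq[OF b] unfolding ib_def eb_def by eventually_elim (simp add: mult.commute)
  then have "AE x in M. real_cond_exp M C (real_cond_exp M FC (\<lambda>x. ia x * ib x)) x =
      real_cond_exp M C (\<lambda>x. eb x * ia x) x"
    by (rule C.real_cond_exp_cong) (auto simp: eb_def)
  moreover have "AE x in M. real_cond_exp M C (\<lambda>x. eb x * ia x) x = eb x * real_cond_exp M C ia x"
    unfolding eb_def by (rule C.real_cond_exp_mult) (auto simp: int_eb_a[unfolded eb_def])
  moreover have "indicator (a \<inter> b) = (\<lambda>x. ia x * ib x)"
    unfolding ia_def ib_def by (auto simp: indicator_def)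
  ultimately show "AE x in M. real_cond_exp M C (indicator (a \<inter> b)) x =
      real_cond_exp M C (indicator a) x * real_cond_exp M C (indicator b) x"
    using tower unfolding eb_def ia_def ib_def by (auto elim!: AE_mp simp: mult.commute)
qed

lemma set_integral_cond_exp_if_cond_indep:
  assumes sF: "subalgebra M F" and sG: "subalgebra M G" and sC: "subalgebra M C"
    and ci: "cond_indep M F G C" and b: "b \<in> sets G" and a: "a \<in> sets F" and c: "c \<in> sets C"
  shows "(\<integral>x\<in>a \<inter> c. indicator b x \<partial>M) = (\<integral>x\<in>a \<inter> c. real_cond_exp M C (indicator b) x \<partial>M)"
proof -
  interpret C: sigma_finite_subalgebra M C using sigma_finite_subalgebra_if_subalgebra[OF sC] .
  let ?g = "real_cond_exp M C (indicator b)"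
  have aM [measurable]: "a \<in> sets M" and bM [measurable]: "b \<in> sets M"
    and cM [measurable]: "c \<in> sets M"
    using a b c sF sG sC by (auto simp: subalgebra_def)
  have [measurable]: "(indicator c :: _ \<Rightarrow> real) \<in> borel_measurable C" using c by simp
  have abM: "a \<inter> b \<in> sets M" using aM bM by auto
  have intg: "integrable M ?g"
    using C.real_cond_exp_int(1)[OF integrable_indicator_real[OF bM]] .
  have intab: "integrable M (indicator (a \<inter> b) :: _ \<Rightarrow> real)"
    using integrable_indicator_real[OF abM] .
  have ci_ab: "AE x in M. real_cond_exp M C (indicator (a \<inter> b)) x =
      real_cond_exp M C (indicator a) x * ?g x"
    using ci a b unfolding cond_indep_def by blast
  have "(\<integral>x\<in>a \<inter> c. indicator b x \<partial>M) = (\<integral>x. indicator c x * indicator (a \<inter> b) x \<partial>M :: real)"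
    unfolding set_lebesgue_integral_def
    by (intro Bochner_Integration.integral_cong) (auto simp: indicator_def)
  also have "\<dots> = (\<integral>x. indicator c x * real_cond_exp M C (indicator (a \<inter> b)) x \<partial>M)"
    by (rule C.real_cond_exp_intg(2)[symmetric])
      (use integrable_mult_indicator[OF cM intab] abM in simp_all)
  also have "\<dots> = (\<integral>x. (indicator c x * ?g x) * real_cond_exp M C (indicator a) x \<partial>M)"
    by (intro integral_cong_AE) (use ci_ab in \<open>auto elim!: AE_mp simp: mult.commute\<close>)
  also have "\<dots> = (\<integral>x. (indicator c x * ?g x) * indicator a x \<partial>M)"
  proof (rule C.real_cond_exp_intg(2))
    show "integrable M (\<lambda>x. indicator c x * ?g x * indicator a x)"
      using integrable_mult_indicator[OF aM integrable_mult_indicator[OF cM intg]]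
      by (simp add: mult.commute)
  qed auto
  also have "\<dots> = (\<integral>x\<in>a \<inter> c. ?g x \<partial>M)"
    unfolding set_lebesgue_integral_def
    by (intro Bochner_Integration.integral_cong) (auto simp: indicator_def)
  finally show ?thesis .
qed

lemma cond_exp_join_eq_if_cond_indep:
  assumes sF: "subalgebra M F" and sG: "subalgebra M G"
    and sC: "subalgebra M C" and sFC: "subalgebra M FC"
    and FC: "sets FC = sigma_sets (space M) {a \<inter> c | a c. a \<in> sets F \<and> c \<in> sets C}"
    and ci: "cond_indep M F G C" and b: "b \<in> sets G"
  shows "AE x in M. real_cond_exp M FC (indicator b) x = real_cond_exp M C (indicator b) x"
proof -
  interpret C: sigma_finite_subalgebra M C using sigma_finite_subalgebra_if_subalgebra[OF sC] .
  interpret FC: sigma_finite_subalgebra M FC using sigma_finite_subalgebra_if_subalgebra[OF sFC] .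
  let ?G = "{a \<inter> c | a c. a \<in> sets F \<and> c \<in> sets C}"
  let ?g = "real_cond_exp M C (indicator b)"
  have bM: "b \<in> sets M" using b sG by (auto simp: subalgebra_def)
  have intb: "integrable M (indicator b :: _ \<Rightarrow> real)" using integrable_indicator_real[OF bM] .
  have intg: "integrable M ?g" using C.real_cond_exp_int(1)[OF intb] .
  have CFC: "sets C \<subseteq> sets FC"
  proof
    fix c assume c: "c \<in> sets C"
    have "space M \<inter> c \<in> ?G" using c sets.top[of F] sF by (auto simp: subalgebra_def)
    moreover have "space M \<inter> c = c" using sets.sets_into_space[OF c] sC by (auto simp: subalgebra_def)
    ultimately show "c \<in> sets FC" unfolding FC by auto
  qed
  have g_FC: "?g \<in> borel_measurable FC"
    using measurable_mono[of borel borel C FC] CFC sFC sC borel_measurable_cond_exp[of M C "indicator b"]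
    by (auto simp: subalgebra_def)
  have GM: "?G \<subseteq> sets M"
    using FC sFC by (auto simp: subalgebra_def)
  have Int_stable: "Int_stable ?G"
    unfolding Int_stable_def
  proof (intro ballI)
    fix x y assume "x \<in> ?G" "y \<in> ?G"
    then obtain a c a' c' where "x = a \<inter> c" "y = a' \<inter> c'"
      "a \<in> sets F" "c \<in> sets C" "a' \<in> sets F" "c' \<in> sets C"
      by blast
    then show "x \<inter> y \<in> ?G"
      by (intro CollectI exI[of _ "a \<inter> a'"] exI[of _ "c \<inter> c'"]) auto
  qed
  show ?thesis
  proof (rule FC.real_cond_exp_charact)
    fix A assume "A \<in> sets FC"
    then have A: "A \<in> sigma_sets (space M) ?G" unfolding FC .
    show "(\<integral>x\<in>A. indicator b x \<partial>M) = (\<integral>x\<in>A. ?g x \<partial>M)"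
      by (rule set_integral_eq_on_sigma_sets[OF Int_stable GM intb intg _ _ A])
        (use C.real_cond_exp_int(2)[OF intb] set_integral_cond_exp_if_cond_indep[OF sF sG sC ci b]
          in auto)
  qed (auto simp: intb intg g_FC)
qed

lemma real_cond_exp_distr:
  assumes T: "T \<in> measurable M X" and sC: "subalgebra (distr M X T) C" and s: "s \<in> sets X"
  shows "AE x in M. real_cond_exp M (vimage_algebra (space M) T C) (indicator (T -` s \<inter> space M)) x =
    real_cond_exp (distr M X T) C (indicator s) (T x)"
proof -
  let ?Q = "distr M X T" and ?C' = "vimage_algebra (space M) T C"
  let ?g = "real_cond_exp ?Q C (indicator s)"
  interpret Q: prob_space ?Q using prob_space_distr[OF T] .
  interpret C: sigma_finite_subalgebra ?Q C using Q.sigma_finite_subalgebra_if_subalgebra[OF sC] .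
  have CX: "sets C \<subseteq> sets X" and space_C: "space C = space X"
    using sC by (auto simp: subalgebra_def)
  have T_space: "T \<in> space M \<rightarrow> space C" using measurable_space[OF T] space_C by auto
  have sets_C': "sets ?C' = {T -` B \<inter> space M | B. B \<in> sets C}"
    using sets_vimage_algebra2[OF T_space] .
  have sC': "subalgebra M ?C'"
    unfolding subalgebra_def sets_C' using CX measurable_sets[OF T] by auto
  interpret C': sigma_finite_subalgebra M ?C' using sigma_finite_subalgebra_if_subalgebra[OF sC'] .
  have int_s: "integrable ?Q (indicator s :: _ \<Rightarrow> real)"
    using Q.integrable_indicator_real s by simp
  have int_g: "integrable ?Q ?g" using C.real_cond_exp_int(1)[OF int_s] .
  have g_X: "?g \<in> borel_measurable X"
    using borel_measurable_cond_exp2[of ?Q C "indicator s"] by simp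
  have gT_C': "(\<lambda>x. ?g (T x)) \<in> borel_measurable ?C'"
    by (rule measurable_compose[OF measurable_vimage_algebra1[OF T_space]]) simp
  have int_s': "integrable M (indicator (T -` s \<inter> space M) :: _ \<Rightarrow> real)"
    using integrable_indicator_real measurable_sets[OF T s] by simp
  have int_gT: "integrable M (\<lambda>x. ?g (T x))"
    using int_g integrable_distr_eq[OF T g_X] by simp
  show ?thesis
  proof (rule C'.real_cond_exp_charact)
    fix A assume "A \<in> sets ?C'"
    then obtain B where B: "B \<in> sets C" "A = T -` B \<inter> space M" using sets_C' by auto
    have BX: "B \<in> sets X" using B(1) CX by auto
    have "(\<integral>x\<in>A. indicator (T -` s \<inter> space M) x \<partial>M) = (\<integral>x\<in>A. indicator s (T x) \<partial>M :: real)"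
      unfolding set_lebesgue_integral_def B(2)
      by (rule Bochner_Integration.integral_cong) (auto simp: indicator_def)
    also have "\<dots> = (\<integral>y\<in>B. indicator s y \<partial>?Q)"
      unfolding B(2) by (rule set_integral_distr_vimage[OF T BX]) (use s in simp)
    also have "\<dots> = (\<integral>y\<in>B. ?g y \<partial>?Q)"
      by (rule C.real_cond_exp_intA[OF int_s B(1)])
    also have "\<dots> = (\<integral>x\<in>A. ?g (T x) \<partial>M)"
      unfolding B(2) by (rule set_integral_distr_vimage[OF T BX g_X, symmetric])
    finally show "(\<integral>x\<in>A. indicator (T -` s \<inter> space M) x \<partial>M) = (\<integral>x\<in>A. ?g (T x) \<partial>M)" .
  qed (auto simp: int_s' int_gT gT_C')
qed

lemma cond_indep_distr:
  assumes T: "T \<in> measurable M X" and sF: "subalgebra (distr M X T) F"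
    and sG: "subalgebra (distr M X T) G" and sC: "subalgebra (distr M X T) C"
    and ci: "cond_indep M (vimage_algebra (space M) T F) (vimage_algebra (space M) T G)
      (vimage_algebra (space M) T C)"
  shows "cond_indep (distr M X T) F G C"
  unfolding cond_indep_def
proof (intro ballI)
  let ?Q = "distr M X T" and ?C' = "vimage_algebra (space M) T C"
  let ?e = "\<lambda>s. real_cond_exp ?Q C (indicator s)"
  fix a b assume a: "a \<in> sets F" and b: "b \<in> sets G"
  have aX: "a \<in> sets X" and bX: "b \<in> sets X" using a b sF sG by (auto simp: subalgebra_def)
  let ?a = "T -` a \<inter> space M" and ?b = "T -` b \<inter> space M"
  have "?a \<in> sets (vimage_algebra (space M) T F)" "?b \<in> sets (vimage_algebra (space M) T G)"
    using a b by (auto intro: in_vimage_algebra)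
  then have "AE x in M. real_cond_exp M ?C' (indicator (?a \<inter> ?b)) x =
      real_cond_exp M ?C' (indicator ?a) x * real_cond_exp M ?C' (indicator ?b) x"
    using ci unfolding cond_indep_def by blast
  moreover have "T -` (a \<inter> b) \<inter> space M = ?a \<inter> ?b" by auto
  then have "AE x in M. real_cond_exp M ?C' (indicator (?a \<inter> ?b)) x = ?e (a \<inter> b) (T x)"
    using real_cond_exp_distr[OF T sC, of "a \<inter> b"] aX bX by simp
  moreover have "AE x in M. real_cond_exp M ?C' (indicator ?a) x = ?e a (T x)"
    by (rule real_cond_exp_distr[OF T sC aX])
  moreover have "AE x in M. real_cond_exp M ?C' (indicator ?b) x = ?e b (T x)"
    by (rule real_cond_exp_distr[OF T sC bX])
  ultimately have ae: "AE x in M. ?e (a \<inter> b) (T x) = ?e a (T x) * ?e b (T x)"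
    by eventually_elim simp
  have "{y \<in> space X. ?e (a \<inter> b) y = ?e a y * ?e b y} \<in> sets X"
    using borel_measurable_cond_exp2[of ?Q C] by measurable
  then show "AE y in ?Q. ?e (a \<inter> b) y = ?e a y * ?e b y"
    using ae by (subst AE_distr_iff[OF T])
qed

end

section \<open>Active trails and d-separation\<close>

text \<open>active_reach D A Z u d: some trail from a node of A outside Z to u has all inner nodes
  active given Z; d records whether its last edge points into u. A step up from u makes u a
  collider exactly when d holds.\<close>
inductive active_reach :: "('n \<times> 'n) set \<Rightarrow> 'n set \<Rightarrow> 'n set \<Rightarrow> 'n \<Rightarrow> bool \<Rightarrow> bool"
  for D A Z where
  start: "a \<in> A \<Longrightarrow> a \<notin> Z \<Longrightarrow> active_reach D A Z a False"
| down: "active_reach D A Z u d \<Longrightarrow> u \<notin> Z \<Longrightarrow> (u, w) \<in> D \<Longrightarrow> active_reach D A Z w True"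
| up: "active_reach D A Z u d \<Longrightarrow> (w, u) \<in> D \<Longrightarrow>
    (if d then u \<in> ancestors_of D Z else u \<notin> Z) \<Longrightarrow> active_reach D A Z w False"

definition inner_active :: "('n \<times> 'n) set \<Rightarrow> 'n set \<Rightarrow> 'n list \<Rightarrow> bool" where
  "inner_active D Z p \<longleftrightarrow> (\<forall>i. 0 < i \<longrightarrow> i + 1 < length p \<longrightarrow>
     (is_collider D p i \<longrightarrow> p ! i \<in> ancestors_of D Z) \<and> (\<not> is_collider D p i \<longrightarrow> p ! i \<notin> Z))"

lemma not_blocked_if_inner_active:
  "hd p \<notin> Z \<Longrightarrow> last p \<notin> Z \<Longrightarrow> inner_active D Z p \<Longrightarrow> \<not> blocked D Z p"
  unfolding blocked_def inner_active_def by blast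

lemma is_path_snoc:
  assumes p: "is_path D p" and w: "(last p, w) \<in> D \<or> (w, last p) \<in> D"
  shows "is_path D (p @ [w])"
  unfolding is_path_def
proof (intro conjI allI impI)
  fix i assume i: "Suc i < length (p @ [w])"
  have "p \<noteq> []" using p by (simp add: is_path_def)
  show "((p @ [w]) ! i, (p @ [w]) ! Suc i) \<in> D \<or> ((p @ [w]) ! Suc i, (p @ [w]) ! i) \<in> D"
  proof (cases "Suc i < length p")
    case True
    then show ?thesis using p by (simp add: is_path_def nth_append)
  next
    case False
    then have "i = length p - 1" "Suc i = length p" using i by auto
    then show ?thesis using w \<open>p \<noteq> []\<close> by (simp add: nth_append last_conv_nth)
  qed
qed simp

lemma is_collider_snoc:
  assumes "0 < i" and "i + 1 < length p"
  shows "is_collider D (p @ [w]) i = is_collider D p i"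
proof -
  have "i - 1 < length p" "i < length p" using assms by auto
  then show ?thesis using assms unfolding is_collider_def by (simp add: nth_append)
qed

lemma is_collider_snoc_last:
  assumes "2 \<le> length p"
  shows "is_collider D (p @ [w]) (length p - 1) \<longleftrightarrow>
    (p ! (length p - 2), last p) \<in> D \<and> (w, last p) \<in> D"
proof -
  have "length p - 1 - 1 = length p - 2" "length p - 2 < length p" "length p - 1 < length p"
    "length p - 1 + 1 = length p" "p \<noteq> []"
    using assms by auto
  then show ?thesis unfolding is_collider_def by (simp add: nth_append last_conv_nth)
qed

lemma inner_active_snoc:
  assumes p: "inner_active D Z p"
    and last: "2 \<le> length p \<Longrightarrow>
      (is_collider D (p @ [w]) (length p - 1) \<longrightarrow> last p \<in> ancestors_of D Z) \<and>
      (\<not> is_collider D (p @ [w]) (length p - 1) \<longrightarrow> last p \<notin> Z)"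
  shows "inner_active D Z (p @ [w])"
  unfolding inner_active_def
proof (intro allI impI)
  fix i assume i: "0 < i" "i + 1 < length (p @ [w])"
  show "(is_collider D (p @ [w]) i \<longrightarrow> (p @ [w]) ! i \<in> ancestors_of D Z) \<and>
      (\<not> is_collider D (p @ [w]) i \<longrightarrow> (p @ [w]) ! i \<notin> Z)"
  proof (cases "i + 1 < length p")
    case True
    then show ?thesis
      using p i by (simp add: inner_active_def is_collider_snoc nth_append)
  next
    case False
    then have i_eq: "i = length p - 1" and len: "2 \<le> length p" using i by auto
    moreover have "p \<noteq> []" using len by auto
    ultimately have "(p @ [w]) ! i = last p" by (simp add: nth_append last_conv_nth)
    then show ?thesis using last[OF len] i_eq by simp
  qed
qed

lemma active_reach_path:
  assumes asym: "\<And>x y. (x, y) \<in> D \<Longrightarrow> (y, x) \<notin> D"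
  shows "active_reach D A Z u d \<Longrightarrow> \<exists>p. is_path D p \<and> hd p \<in> A \<and> hd p \<notin> Z \<and> last p = u \<and>
    inner_active D Z p \<and> (d \<longleftrightarrow> 2 \<le> length p \<and> (p ! (length p - 2), u) \<in> D)"
proof (induction rule: active_reach.induct)
  case (start a)
  show ?case
    by (rule exI[of _ "[a]"]) (use start in \<open>auto simp: is_path_def inner_active_def\<close>)
next
  case (down u d w)
  then obtain p where p: "is_path D p" "hd p \<in> A" "hd p \<notin> Z" "last p = u" "inner_active D Z p"
    by blast
  have "p \<noteq> []" using p(1) by (simp add: is_path_def)
  then have last_edge: "(p @ [w]) ! (length (p @ [w]) - 2) = u"
    using p(4) by (simp add: nth_append last_conv_nth)
  have "\<not> is_collider D (p @ [w]) (length p - 1)" if "2 \<le> length p"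
    using is_collider_snoc_last[OF that] asym[OF down.hyps(3)] p(4) by simp
  then have "inner_active D Z (p @ [w])"
    using inner_active_snoc[OF p(5)] down.hyps(2) p(4) by blast
  then show ?case
    using is_path_snoc[OF p(1)] p down.hyps(3) last_edge \<open>p \<noteq> []\<close>
    by (intro exI[of _ "p @ [w]"]) (auto simp: Suc_le_eq)
next
  case (up u d w)
  then obtain p where p: "is_path D p" "hd p \<in> A" "hd p \<notin> Z" "last p = u" "inner_active D Z p"
    "d \<longleftrightarrow> 2 \<le> length p \<and> (p ! (length p - 2), u) \<in> D"
    by blast
  have "p \<noteq> []" using p(1) by (simp add: is_path_def)
  then have last_edge: "(p @ [w]) ! (length (p @ [w]) - 2) = u"
    using p(4) by (simp add: nth_append last_conv_nth)
  have "is_collider D (p @ [w]) (length p - 1) \<longleftrightarrow> d" if "2 \<le> length p"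
    using is_collider_snoc_last[OF that] up.hyps(2) p(4,6) that by auto
  then have "inner_active D Z (p @ [w])"
    using inner_active_snoc[OF p(5)] up.hyps(3) p(4) by (auto split: if_splits)
  then show ?case
    using is_path_snoc[OF p(1)] p up.hyps(2) asym[OF up.hyps(2)] last_edge \<open>p \<noteq> []\<close>
    by (intro exI[of _ "p @ [w]"]) auto
qed

lemma active_reach_descendant:
  assumes "(v, x) \<in> D\<^sup>*" and "active_reach D A Z v d" and "\<And>y. (v, y) \<in> D\<^sup>* \<Longrightarrow> y \<notin> Z"
  shows "\<exists>d'. active_reach D A Z x d'"
  using assms(1)
proof (induction rule: rtrancl_induct)
  case base
  then show ?case using assms(2) by blast
next
  case (step y x)
  then obtain d' where "active_reach D A Z y d'" by blast
  moreover have "y \<notin> Z" using assms(3) step(1) .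
  ultimately show ?case using active_reach.down[of D A Z y _ x] step(2) by blast
qed

lemma active_reach_ancestor:
  assumes "(x, t) \<in> D\<^sup>*" and "active_reach D A Z t False" and "\<And>y. (x, y) \<in> D\<^sup>* \<Longrightarrow> y \<notin> Z"
  shows "active_reach D A Z x False"
  using assms
proof (induction rule: converse_rtrancl_induct)
  case base
  then show ?case by blast
next
  case (step x y)
  have "active_reach D A Z y False"
    using step(3)[OF step(4)] step(1,5) by (meson converse_rtrancl_into_rtrancl)
  moreover have "if False then y \<in> ancestors_of D Z else y \<notin> Z" using step(1,5) by auto
  ultimately show ?case by (rule active_reach.up[OF _ step(1)])
qed

locale d_separation =
  fixes D :: "('n \<times> 'n) set" and A B Z :: "'n set"
  assumes asym: "\<And>x y. (x, y) \<in> D \<Longrightarrow> (y, x) \<notin> D"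
    and d_sep: "d_separated D A B Z"
begin

definition relevant :: "'n set" where
  "relevant = ancestors_of D (A \<union> B \<union> Z)"

definition reached :: "'n set" where
  "reached = {u \<in> relevant. u \<notin> Z \<and> (\<exists>d. active_reach D A Z u d)}"

definition unreached :: "'n set" where
  "unreached = relevant - reached - Z"

lemma subset_relevant: "X \<subseteq> A \<union> B \<union> Z \<Longrightarrow> X \<subseteq> relevant"
  unfolding relevant_def ancestors_of_def by blast

lemma relevant_parent: "v \<in> relevant \<Longrightarrow> (p, v) \<in> D \<Longrightarrow> p \<in> relevant"
  unfolding relevant_def ancestors_of_def by (blast intro: converse_rtrancl_into_rtrancl)

lemma B_not_reached: "b \<in> B \<Longrightarrow> b \<notin> reached"
proof
  assume b: "b \<in> B" and "b \<in> reached"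
  then obtain d where "active_reach D A Z b d" and bZ: "b \<notin> Z" unfolding reached_def by blast
  then obtain p where p: "is_path D p" "hd p \<in> A" "hd p \<notin> Z" "last p = b" "inner_active D Z p"
    using active_reach_path[OF asym] by blast
  then have "\<not> blocked D Z p" using not_blocked_if_inner_active[of p Z D] bZ by simp
  moreover have "blocked D Z p" using d_sep p b unfolding d_separated_def by blast
  ultimately show False by simp
qed

lemma A_subset: "A \<subseteq> reached \<union> Z"
  using subset_relevant[of A] active_reach.start[of _ A Z D] unfolding reached_def by auto

lemma B_subset: "B \<subseteq> unreached \<union> Z"
  using B_not_reached subset_relevant[of B] unfolding unreached_def by blast

lemma reached_parent:
  assumes v: "v \<in> reached" and e: "(p, v) \<in> D"
  shows "p \<in> reached \<union> Z"
proof (cases "p \<in> Z")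
  case False
  have v_rel: "v \<in> relevant" and vZ: "v \<notin> Z" using v unfolding reached_def by auto
  obtain d where r: "active_reach D A Z v d" using v unfolding reached_def by blast
  have "active_reach D A Z p False"
  proof (cases "d \<longrightarrow> v \<in> ancestors_of D Z")
    case True
    then have "if d then v \<in> ancestors_of D Z else v \<notin> Z" using vZ by auto
    then show ?thesis by (rule active_reach.up[OF r e])
  next
    case False
    then have not_anc: "v \<notin> ancestors_of D Z" by auto
    \<comment> \<open>v has a descendant in A \<union> B \<union> Z, reached going down; it avoids Z, so it is reached
      and hence in A, and the trail back up to v arrives with d = False\<close>
    obtain t where t: "t \<in> A \<union> B \<union> Z" "(v, t) \<in> D\<^sup>*"
      using v_rel unfolding relevant_def ancestors_of_def by blast
    have desc: "y \<notin> Z" if "(v, y) \<in> D\<^sup>*" for y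
      using not_anc that unfolding ancestors_of_def by blast
    have tZ: "t \<notin> Z" using desc t(2) .
    obtain d' where "active_reach D A Z t d'" using active_reach_descendant[OF t(2) r desc] by blast
    then have "t \<in> reached" using subset_relevant[of "{t}"] t(1) tZ unfolding reached_def by blast
    then have "t \<in> A" using B_not_reached t(1) tZ by blast
    then have "active_reach D A Z v False"
      using active_reach_ancestor[OF t(2) active_reach.start desc] tZ by blast
    moreover have "if False then v \<in> ancestors_of D Z else v \<notin> Z" using vZ by simp
    ultimately show ?thesis by (rule active_reach.up[OF _ e])
  qed
  then show ?thesis using relevant_parent[OF v_rel e] False unfolding reached_def by blast
qed simp

lemma unreached_parent:
  assumes v: "v \<in> unreached" and e: "(p, v) \<in> D"
  shows "p \<in> unreached \<union> Z"
proof (cases "p \<in> Z")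
  case False
  have v_rel: "v \<in> relevant" and vZ: "v \<notin> Z" and v_nr: "v \<notin> reached"
    using v unfolding unreached_def by auto
  have "p \<notin> reached"
  proof
    assume "p \<in> reached"
    then obtain d where "active_reach D A Z p d" "p \<notin> Z" unfolding reached_def by blast
    then have "active_reach D A Z v True" using active_reach.down[OF _ _ e] by blast
    then show False using v_nr v_rel vZ unfolding reached_def by blast
  qed
  then show ?thesis using relevant_parent[OF v_rel e] False unfolding unreached_def by blast
qed simp

lemma Z_parents:
  assumes v: "v \<in> Z"
  shows "(\<forall>p. (p, v) \<in> D \<longrightarrow> p \<in> reached \<union> Z) \<or> (\<forall>p. (p, v) \<in> D \<longrightarrow> p \<in> unreached \<union> Z)"
proof (rule ccontr)
  assume "\<not> ?thesis"
  then obtain p1 p2 where e1: "(p1, v) \<in> D" "p1 \<notin> reached \<union> Z"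
    and e2: "(p2, v) \<in> D" "p2 \<notin> unreached \<union> Z"
    by blast
  have v_rel: "v \<in> relevant" using v subset_relevant[of Z] by auto
  have "p2 \<in> reached" using relevant_parent[OF v_rel e2(1)] e2(2) unfolding unreached_def by blast
  then obtain d where "active_reach D A Z p2 d" "p2 \<notin> Z" unfolding reached_def by blast
  then have "active_reach D A Z v True" using active_reach.down[OF _ _ e2(1)] by blast
  moreover have "v \<in> ancestors_of D Z" using v unfolding ancestors_of_def by blast
  ultimately have "active_reach D A Z p1 False" using active_reach.up[OF _ e1(1)] by fastforce
  then show False using relevant_parent[OF v_rel e1(1)] e1(2) unfolding reached_def by blast
qed

end

section \<open>Solving the component-wise equations\<close>

definition scc_parents :: "('v \<times> 'v) set \<Rightarrow> 'v \<Rightarrow> 'v set" where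
  "scc_parents E v = parents_set E (scc E v) - scc E v"

definition scc_faces :: "('v \<times> 'v) set \<Rightarrow> 'v set set \<Rightarrow> 'v \<Rightarrow> 'v set set" where
  "scc_faces E H v = faces_meeting H (scc E v)"

definition anc_card :: "'v set \<Rightarrow> ('v \<times> 'v) set \<Rightarrow> 'v \<Rightarrow> nat" where
  "anc_card V E v = card {u \<in> V. (u, v) \<in> E\<^sup>*}"

lemma scc_parents_subset: "E \<subseteq> V \<times> V \<Longrightarrow> scc_parents E v \<subseteq> V"
  by (auto simp: scc_parents_def parents_set_def parents_def)

lemma scc_faces_subset: "scc_faces E H v \<subseteq> maxfaces H"
  by (auto simp: scc_faces_def faces_meeting_def)

lemma scc_parents_iff:
  "u \<in> scc_parents E v \<longleftrightarrow> u \<notin> scc E v \<and> (\<exists>w\<in>scc E v. (u, w) \<in> E)"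
  by (auto simp: scc_parents_def parents_set_def parents_def)

lemma anc_card_less:
  assumes V: "finite V" and v: "v \<in> V" and u: "u \<in> scc_parents E v"
  shows "anc_card V E u < anc_card V E v"
proof -
  obtain w where w: "w \<in> scc E v" "(u, w) \<in> E" and u_out: "u \<notin> scc E v"
    using u by (auto simp: scc_parents_iff)
  have "(w, v) \<in> E\<^sup>*" using w by (auto simp: scc_def anc_def)
  then have uv: "(u, v) \<in> E\<^sup>*" using w by (meson converse_rtrancl_into_rtrancl)
  have "(v, u) \<notin> E\<^sup>*" using u_out uv by (auto simp: scc_def anc_def desc_def)
  then have "{x \<in> V. (x, u) \<in> E\<^sup>*} \<subset> {x \<in> V. (x, v) \<in> E\<^sup>*}"
    using uv v by (auto intro: rtrancl_trans)
  then show ?thesis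
    unfolding anc_card_def using V by (intro psubset_card_mono) auto
qed

lemma anc_card_le: "finite V \<Longrightarrow> anc_card V E v \<le> card V"
  unfolding anc_card_def by (intro card_mono) auto

definition solves_componentwise ::
    "'v set \<Rightarrow> ('v \<times> 'v) set \<Rightarrow> 'v set set \<Rightarrow> ('v \<Rightarrow> ('v \<Rightarrow> 'x) \<times> ('v set \<Rightarrow> 'e) \<Rightarrow> 'x)
      \<Rightarrow> ('v set \<Rightarrow> 'e) \<Rightarrow> ('v \<Rightarrow> 'x) \<Rightarrow> bool" where
  "solves_componentwise V E H g e x \<longleftrightarrow>
     (\<forall>v\<in>V. x v = g v (restrict x (scc_parents E v), restrict e (scc_faces E H v)))"

text \<open>After n rounds of substitution the value at v is correct as soon as v has fewer than
  n ancestors.\<close>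
primrec solve_iter :: "('v \<times> 'v) set \<Rightarrow> 'v set set \<Rightarrow> ('v \<Rightarrow> ('v \<Rightarrow> 'x) \<times> ('v set \<Rightarrow> 'e) \<Rightarrow> 'x)
    \<Rightarrow> ('v set \<Rightarrow> 'e) \<Rightarrow> nat \<Rightarrow> 'v \<Rightarrow> 'x" where
  "solve_iter E H g e 0 = (\<lambda>_. undefined)"
| "solve_iter E H g e (Suc n) =
     (\<lambda>v. g v (restrict (solve_iter E H g e n) (scc_parents E v), restrict e (scc_faces E H v)))"

lemma solve_iter_eq_if_solves:
  assumes V: "finite V" and E: "E \<subseteq> V \<times> V" and x: "solves_componentwise V E H g e x"
  shows "v \<in> V \<Longrightarrow> anc_card V E v < n \<Longrightarrow> solve_iter E H g e n v = x v"
proof (induction n arbitrary: v)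
  case 0
  then show ?case by simp
next
  case (Suc n)
  have "restrict (solve_iter E H g e n) (scc_parents E v) = restrict x (scc_parents E v)"
  proof (rule restrict_ext)
    fix u assume u: "u \<in> scc_parents E v"
    have "u \<in> V" using u scc_parents_subset[OF E] by blast
    then show "solve_iter E H g e n u = x u"
      using Suc.IH anc_card_less[OF V Suc.prems(1) u] Suc.prems(2) by simp
  qed
  then show ?case using x Suc.prems(1) by (simp add: solves_componentwise_def)
qed

lemma solve_iter_stable:
  assumes V: "finite V" and E: "E \<subseteq> V \<times> V"
  shows "v \<in> V \<Longrightarrow> anc_card V E v < n \<Longrightarrow> solve_iter E H g e n v = solve_iter E H g e (Suc n) v"
proof (induction n arbitrary: v)
  case 0
  then show ?case by simp
next
  case (Suc n)
  have "restrict (solve_iter E H g e n) (scc_parents E v) =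
      restrict (solve_iter E H g e (Suc n)) (scc_parents E v)"
  proof (rule restrict_ext)
    fix u assume u: "u \<in> scc_parents E v"
    have "u \<in> V" using u scc_parents_subset[OF E] by blast
    then show "solve_iter E H g e n u = solve_iter E H g e (Suc n) u"
      using Suc.IH anc_card_less[OF V Suc.prems(1) u] Suc.prems(2) by (simp del: solve_iter.simps)
  qed
  then show ?case by (simp only: solve_iter.simps)
qed

lemma solves_componentwise_solve_iter:
  assumes V: "finite V" and E: "E \<subseteq> V \<times> V"
  shows "solves_componentwise V E H g e (solve_iter E H g e (Suc (card V)))"
  unfolding solves_componentwise_def
proof
  fix v assume v: "v \<in> V"
  have "restrict (solve_iter E H g e (card V)) (scc_parents E v) =
      restrict (solve_iter E H g e (Suc (card V))) (scc_parents E v)"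
  proof (rule restrict_ext)
    fix u assume u: "u \<in> scc_parents E v"
    have "anc_card V E u < card V"
      using anc_card_less[OF V v u] anc_card_le[OF V, of E v] by simp
    then show "solve_iter E H g e (card V) u = solve_iter E H g e (Suc (card V)) u"
      using solve_iter_stable[OF V E] u scc_parents_subset[OF E] by blast
  qed
  then show "solve_iter E H g e (Suc (card V)) v = g v (restrict (solve_iter E H g e (Suc (card V)))
      (scc_parents E v), restrict e (scc_faces E H v))"
    by (simp only: solve_iter.simps)
qed

lemma solves_componentwise_unique:
  assumes V: "finite V" and E: "E \<subseteq> V \<times> V"
    and x: "solves_componentwise V E H g e x" and y: "solves_componentwise V E H g e y"
  shows "restrict x V = restrict y V"
proof -
  let ?s = "solve_iter E H g e (Suc (card V))"
  have "?s v = z v" if "v \<in> V" "solves_componentwise V E H g e z" for v z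
    using solve_iter_eq_if_solves[OF V E that(2) that(1)] anc_card_le[OF V, of E v]
    by (simp del: solve_iter.simps)
  then have "x v = y v" if "v \<in> V" for v
    using x y that by metis
  then show ?thesis by (auto simp: restrict_def)
qed

section \<open>Coordinate sigma-algebras of a component-wise structural system\<close>

text \<open>Unlike in csSEP, Y solves the equations at every sample point, so that measurability
  propagates along the acyclic augmentation without null sets.\<close>
locale componentwise_system = prob_space \<Omega> for \<Omega> :: "'w measure" +
  fixes V :: "'v set" and E :: "('v \<times> 'v) set" and H :: "'v set set"
    and M :: "'v \<Rightarrow> 'x measure" and N :: "'v set \<Rightarrow> real measure"
    and Ev :: "'v set \<Rightarrow> 'w \<Rightarrow> real" and Y :: "'w \<Rightarrow> 'v \<Rightarrow> 'x"
    and g :: "'v \<Rightarrow> ('v \<Rightarrow> 'x) \<times> ('v set \<Rightarrow> real) \<Rightarrow> 'x"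
  assumes hedg: "HEDG V E H"
    and indep_noise: "indep_vars N Ev (maxfaces H)"
    and g_measurable: "\<And>v. v \<in> V \<Longrightarrow>
      g v \<in> measurable (PiM (scc_parents E v) M \<Otimes>\<^sub>M PiM (scc_faces E H v) N) (M v)"
    and Y_solves: "\<And>\<omega>. \<omega> \<in> space \<Omega> \<Longrightarrow> solves_componentwise V E H g (\<lambda>F. Ev F \<omega>) (Y \<omega>)"
begin

abbreviation "D \<equiv> acag V E H"
abbreviation "nodes \<equiv> aug_nodes V H"

definition var_nodes :: "('v + 'v set) set \<Rightarrow> 'v set" where
  "var_nodes S = {v. Inl v \<in> S}"

definition noise_nodes :: "('v + 'v set) set \<Rightarrow> 'v set set" where
  "noise_nodes S = {F. Inr F \<in> S}"

definition coord_map :: "('v + 'v set) set \<Rightarrow> 'w \<Rightarrow> ('v \<Rightarrow> 'x) \<times> ('v set \<Rightarrow> real)" where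
  "coord_map S \<omega> = (restrict (Y \<omega>) (var_nodes S), restrict (\<lambda>F. Ev F \<omega>) (noise_nodes S))"

abbreviation coord_space :: "('v + 'v set) set \<Rightarrow> (('v \<Rightarrow> 'x) \<times> ('v set \<Rightarrow> real)) measure" where
  "coord_space S \<equiv> PiM (var_nodes S) M \<Otimes>\<^sub>M PiM (noise_nodes S) N"

definition coord_sigma :: "('v + 'v set) set \<Rightarrow> 'w measure" where
  "coord_sigma S = vimage_algebra (space \<Omega>) (coord_map S) (coord_space S)"

definition ancestral :: "('v + 'v set) set \<Rightarrow> bool" where
  "ancestral S \<longleftrightarrow> (\<forall>x\<in>S. \<forall>p. (p, x) \<in> D \<longrightarrow> p \<in> S)"

definition rank :: "'v + 'v set \<Rightarrow> nat" where
  "rank x = (case x of Inl v \<Rightarrow> anc_card V E v | Inr F \<Rightarrow> 0)"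

lemma finite_V: "finite V" and E_subset: "E \<subseteq> V \<times> V"
  using hedg by (auto simp: HEDG_def)

lemma Y_eq: "\<omega> \<in> space \<Omega> \<Longrightarrow> v \<in> V \<Longrightarrow>
    Y \<omega> v = g v (restrict (Y \<omega>) (scc_parents E v), restrict (\<lambda>F. Ev F \<omega>) (scc_faces E H v))"
  using Y_solves by (auto simp: solves_componentwise_def)

lemma Ev_measurable: "F \<in> maxfaces H \<Longrightarrow> Ev F \<in> measurable \<Omega> (N F)"
  using indep_noise by (auto simp: indep_vars_def)

lemma acag_Inl: "v \<in> V \<Longrightarrow> u \<in> scc_parents E v \<Longrightarrow> (Inl u, Inl v) \<in> D"
  using E_subset by (auto simp: acag_def scc_parents_iff)

lemma acag_Inr: "v \<in> V \<Longrightarrow> F \<in> scc_faces E H v \<Longrightarrow> (Inr F, Inl v) \<in> D"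
  by (auto simp: acag_def scc_faces_def faces_meeting_def)

lemma acag_cases:
  assumes "(p, x) \<in> D"
  obtains v u where "v \<in> V" "x = Inl v" "p = Inl u" "u \<in> scc_parents E v"
    | v F where "v \<in> V" "x = Inl v" "p = Inr F" "F \<in> scc_faces E H v"
  using assms unfolding acag_def scc_parents_iff scc_faces_def faces_meeting_def
  by (auto simp: Int_commute) blast

lemma rank_less:
  assumes "(p, x) \<in> D"
  shows "rank p < rank x"
  using assms
proof (cases rule: acag_cases)
  case (1 v u)
  then show ?thesis using anc_card_less[OF finite_V] by (simp add: rank_def)
next
  case (2 v F)
  have "v \<in> {u \<in> V. (u, v) \<in> E\<^sup>*}" using 2 by auto
  then have "anc_card V E v > 0" using finite_V by (auto simp: anc_card_def card_gt_0_iff)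
  then show ?thesis using 2 by (simp add: rank_def)
qed

lemma acag_asym: "(x, y) \<in> D \<Longrightarrow> (y, x) \<notin> D"
  using rank_less by (meson less_asym)

lemma acag_nodes:
  assumes "(p, x) \<in> D"
  shows "p \<in> nodes \<and> x \<in> nodes"
  using assms
proof (cases rule: acag_cases)
  case (1 v u)
  then show ?thesis using scc_parents_subset[OF E_subset] by (auto simp: aug_nodes_def)
next
  case (2 v F)
  then show ?thesis using scc_faces_subset[of E H v] by (auto simp: aug_nodes_def)
qed

lemma ancestral_nodes: "ancestral nodes"
  using acag_nodes unfolding ancestral_def by blast

lemma finite_nodes: "finite nodes"
proof -
  have "maxfaces H \<subseteq> Pow V"
    using hedg by (auto simp: HEDG_def simplicial_complex_def maxfaces_def)
  then have "finite (maxfaces H)" using finite_V by (meson finite_Pow_iff finite_subset)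
  then show ?thesis using finite_V unfolding aug_nodes_def by simp
qed

lemma ancestors_of_nodes: "Z \<subseteq> nodes \<Longrightarrow> ancestors_of D Z \<subseteq> nodes"
  unfolding ancestors_of_def by (auto elim: converse_rtranclE dest: acag_nodes)

lemma Y_measurable_if_parents:
  assumes space: "space F = space \<Omega>" and v: "v \<in> V"
    and parents: "\<And>u. u \<in> scc_parents E v \<Longrightarrow> (\<lambda>\<omega>. Y \<omega> u) \<in> measurable F (M u)"
    and faces: "\<And>G. G \<in> scc_faces E H v \<Longrightarrow> Ev G \<in> measurable F (N G)"
  shows "(\<lambda>\<omega>. Y \<omega> v) \<in> measurable F (M v)"
proof -
  have "(\<lambda>\<omega>. g v (restrict (Y \<omega>) (scc_parents E v), restrict (\<lambda>G. Ev G \<omega>) (scc_faces E H v)))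
      \<in> measurable F (M v)"
    by (rule measurable_compose[OF _ g_measurable[OF v]])
      (intro measurable_Pair measurable_restrict parents faces)
  then show ?thesis
    by (rule measurable_cong[THEN iffD1, rotated]) (use space Y_eq v in auto)
qed

lemma Y_measurable_ancestral:
  assumes space: "space F = space \<Omega>" and S: "ancestral S"
    and noise: "\<And>G. Inr G \<in> S \<Longrightarrow> Ev G \<in> measurable F (N G)"
  shows "Inl v \<in> S \<Longrightarrow> v \<in> V \<Longrightarrow> (\<lambda>\<omega>. Y \<omega> v) \<in> measurable F (M v)"
proof (induction "rank (Inl v)" arbitrary: v rule: less_induct)
  case less
  show ?case
  proof (rule Y_measurable_if_parents[OF space less(3)])
    fix u assume u: "u \<in> scc_parents E v"
    have e: "(Inl u, Inl v) \<in> D" using acag_Inl[OF less(3) u] .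
    show "(\<lambda>\<omega>. Y \<omega> u) \<in> measurable F (M u)"
      using less(1)[OF rank_less[OF e]] e S less(2) scc_parents_subset[OF E_subset] u
      unfolding ancestral_def by blast
  next
    fix G assume G: "G \<in> scc_faces E H v"
    show "Ev G \<in> measurable F (N G)"
      using acag_Inr[OF less(3) G] S less(2) noise unfolding ancestral_def by blast
  qed
qed

lemma Y_measurable: "v \<in> V \<Longrightarrow> (\<lambda>\<omega>. Y \<omega> v) \<in> measurable \<Omega> (M v)"
  by (rule Y_measurable_ancestral[OF refl ancestral_nodes]) (auto simp: aug_nodes_def Ev_measurable)

lemma var_nodes_subset: "S \<subseteq> nodes \<Longrightarrow> var_nodes S \<subseteq> V"
  and noise_nodes_subset: "S \<subseteq> nodes \<Longrightarrow> noise_nodes S \<subseteq> maxfaces H"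
  by (auto simp: var_nodes_def noise_nodes_def aug_nodes_def)

lemma coord_map_measurable: "S \<subseteq> nodes \<Longrightarrow> coord_map S \<in> measurable \<Omega> (coord_space S)"
  unfolding coord_map_def
  by (intro measurable_Pair measurable_restrict Y_measurable Ev_measurable)
    (auto dest: var_nodes_subset noise_nodes_subset)

lemma space_coord_sigma [simp]: "space (coord_sigma S) = space \<Omega>"
  by (simp add: coord_sigma_def)

lemma measurable_coord_map_iff:
  assumes S: "S \<subseteq> nodes" and space: "space F = space \<Omega>"
  shows "coord_map S \<in> measurable F (coord_space S) \<longleftrightarrow>
    (\<forall>v\<in>var_nodes S. (\<lambda>\<omega>. Y \<omega> v) \<in> measurable F (M v)) \<and>
    (\<forall>G\<in>noise_nodes S. Ev G \<in> measurable F (N G))"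
proof safe
  assume f: "coord_map S \<in> measurable F (coord_space S)"
  show "(\<lambda>\<omega>. Y \<omega> v) \<in> measurable F (M v)" if v: "v \<in> var_nodes S" for v
    using measurable_compose[OF measurable_compose[OF f measurable_fst]
        measurable_component_singleton[OF v]] v
    by (simp add: coord_map_def)
  show "Ev G \<in> measurable F (N G)" if G: "G \<in> noise_nodes S" for G
    using measurable_compose[OF measurable_compose[OF f measurable_snd]
        measurable_component_singleton[OF G]] G
    by (simp add: coord_map_def)
next
  assume "\<forall>v\<in>var_nodes S. (\<lambda>\<omega>. Y \<omega> v) \<in> measurable F (M v)"
    and "\<forall>G\<in>noise_nodes S. Ev G \<in> measurable F (N G)"
  then show "coord_map S \<in> measurable F (coord_space S)"
    unfolding coord_map_def by (intro measurable_Pair measurable_restrict) auto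
qed

lemma coord_sigma_le_iff:
  assumes S: "S \<subseteq> nodes" and space: "space F = space \<Omega>"
  shows "sets (coord_sigma S) \<subseteq> sets F \<longleftrightarrow>
    (\<forall>v\<in>var_nodes S. (\<lambda>\<omega>. Y \<omega> v) \<in> measurable F (M v)) \<and>
    (\<forall>G\<in>noise_nodes S. Ev G \<in> measurable F (N G))"
proof -
  have map_space: "coord_map S \<in> space \<Omega> \<rightarrow> space (coord_space S)"
    using measurable_space[OF coord_map_measurable[OF S]] by blast
  have "sets (coord_sigma S) \<subseteq> sets F \<longleftrightarrow> coord_map S \<in> measurable F (coord_space S)"
  proof
    show "coord_map S \<in> measurable F (coord_space S)" if "sets (coord_sigma S) \<subseteq> sets F"
      using measurable_mono[of "coord_space S" "coord_space S" "coord_sigma S" F] that space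
        measurable_vimage_algebra1[OF map_space]
      unfolding coord_sigma_def by auto
    assume f: "coord_map S \<in> measurable F (coord_space S)"
    show "sets (coord_sigma S) \<subseteq> sets F"
      unfolding coord_sigma_def sets_vimage_algebra2[OF map_space]
      using measurable_sets[OF f] space by auto
  qed
  then show ?thesis using measurable_coord_map_iff[OF S space] by simp
qed

lemma coord_sigma_subalgebra:
  assumes S: "S \<subseteq> nodes"
  shows "subalgebra \<Omega> (coord_sigma S)"
proof -
  have "sets (coord_sigma S) \<subseteq> sets \<Omega>"
    by (subst coord_sigma_le_iff[OF S refl])
      (use var_nodes_subset[OF S] noise_nodes_subset[OF S] in \<open>auto intro: Y_measurable Ev_measurable\<close>)
  then show ?thesis by (simp add: subalgebra_def)
qed

lemma measurable_coord_sigma: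
  assumes "S \<subseteq> nodes"
  shows "v \<in> var_nodes S \<Longrightarrow> (\<lambda>\<omega>. Y \<omega> v) \<in> measurable (coord_sigma S) (M v)"
    and "G \<in> noise_nodes S \<Longrightarrow> Ev G \<in> measurable (coord_sigma S) (N G)"
  using coord_sigma_le_iff[OF assms space_coord_sigma] by blast+

lemma coord_sigma_mono:
  assumes ST: "S \<subseteq> T" and T: "T \<subseteq> nodes"
  shows "sets (coord_sigma S) \<subseteq> sets (coord_sigma T)"
proof -
  have "var_nodes S \<subseteq> var_nodes T" "noise_nodes S \<subseteq> noise_nodes T"
    using ST by (auto simp: var_nodes_def noise_nodes_def)
  then show ?thesis
    by (subst coord_sigma_le_iff) (use ST T measurable_coord_sigma[OF T] in auto)
qed

lemma coord_sigma_Un_le: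
  assumes S: "S \<subseteq> nodes" and U: "U \<subseteq> nodes" and space: "space F = space \<Omega>"
    and "sets (coord_sigma S) \<subseteq> sets F" and "sets (coord_sigma U) \<subseteq> sets F"
  shows "sets (coord_sigma (S \<union> U)) \<subseteq> sets F"
proof -
  have "var_nodes (S \<union> U) = var_nodes S \<union> var_nodes U"
    "noise_nodes (S \<union> U) = noise_nodes S \<union> noise_nodes U"
    by (auto simp: var_nodes_def noise_nodes_def)
  then show ?thesis
    using assms coord_sigma_le_iff[OF S space] coord_sigma_le_iff[OF U space]
      coord_sigma_le_iff[of "S \<union> U" F]
    by auto
qed

lemma sets_coord_sigma_Un:
  assumes S: "S \<subseteq> nodes" and U: "U \<subseteq> nodes"
  shows "sets (coord_sigma (S \<union> U)) =
    sigma_sets (space \<Omega>) {a \<inter> c | a c. a \<in> sets (coord_sigma S) \<and> c \<in> sets (coord_sigma U)}"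
    (is "_ = sigma_sets _ ?G")
proof
  have G: "?G \<subseteq> Pow (space \<Omega>)"
    using sets.sets_into_space[of _ "coord_sigma S"] by fastforce
  let ?J = "sigma (space \<Omega>) ?G"
  have sets_J: "sets ?J = sigma_sets (space \<Omega>) ?G" using G by (rule sets_measure_of)
  have "space ?J = space \<Omega>" by (simp add: space_measure_of_conv)
  moreover have "sets (coord_sigma S) \<subseteq> sets ?J"
  proof
    fix a assume a: "a \<in> sets (coord_sigma S)"
    have "a \<inter> space \<Omega> \<in> ?G" using a sets.top[of "coord_sigma U"] by auto
    then show "a \<in> sets ?J" using sets.sets_into_space[OF a] unfolding sets_J by (simp add: Int_absorb2)
  qed
  moreover have "sets (coord_sigma U) \<subseteq> sets ?J"
  proof
    fix c assume c: "c \<in> sets (coord_sigma U)"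
    have "space \<Omega> \<inter> c \<in> ?G" using c sets.top[of "coord_sigma S"] by auto
    then show "c \<in> sets ?J" using sets.sets_into_space[OF c] unfolding sets_J by (simp add: Int_absorb1)
  qed
  ultimately show "sets (coord_sigma (S \<union> U)) \<subseteq> sigma_sets (space \<Omega>) ?G"
    using coord_sigma_Un_le[OF S U] sets_J by blast
next
  have "?G \<subseteq> sets (coord_sigma (S \<union> U))"
    using coord_sigma_mono[of S "S \<union> U"] coord_sigma_mono[of U "S \<union> U"] S U by blast
  then show "sigma_sets (space \<Omega>) ?G \<subseteq> sets (coord_sigma (S \<union> U))"
    using sets.sigma_sets_subset[of ?G "coord_sigma (S \<union> U)"] by simp
qed

definition coord_indep :: "('v + 'v set) set \<Rightarrow> ('v + 'v set) set \<Rightarrow> ('v + 'v set) set \<Rightarrow> bool" where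
  "coord_indep S T U \<longleftrightarrow> cond_indep \<Omega> (coord_sigma S) (coord_sigma T) (coord_sigma U)"

definition cond_exp_ignores :: "('v + 'v set) set \<Rightarrow> ('v + 'v set) set \<Rightarrow> ('v + 'v set) set \<Rightarrow> bool" where
  "cond_exp_ignores S T U \<longleftrightarrow> (\<forall>b\<in>sets (coord_sigma T). AE \<omega> in \<Omega>.
     real_cond_exp \<Omega> (coord_sigma (S \<union> U)) (indicator b) \<omega> =
     real_cond_exp \<Omega> (coord_sigma U) (indicator b) \<omega>)"

lemma coord_indep_iff_cond_exp_ignores:
  assumes S: "S \<subseteq> nodes" and T: "T \<subseteq> nodes" and U: "U \<subseteq> nodes"
  shows "coord_indep S T U \<longleftrightarrow> cond_exp_ignores S T U"
proof
  assume "coord_indep S T U"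
  then show "cond_exp_ignores S T U"
    unfolding cond_exp_ignores_def coord_indep_def
    using cond_exp_join_eq_if_cond_indep[OF coord_sigma_subalgebra[OF S] coord_sigma_subalgebra[OF T]
        coord_sigma_subalgebra[OF U] coord_sigma_subalgebra sets_coord_sigma_Un[OF S U]] S U
    by blast
next
  assume "cond_exp_ignores S T U"
  then show "coord_indep S T U"
    unfolding cond_exp_ignores_def coord_indep_def
    using cond_indep_if_cond_exp_join_eq[OF coord_sigma_subalgebra[OF S] coord_sigma_subalgebra[OF T]
        coord_sigma_subalgebra[OF U] coord_sigma_subalgebra[of "S \<union> U"]
        coord_sigma_mono[of S "S \<union> U"] coord_sigma_mono[of U "S \<union> U"]] S U
    by blast
qed

lemma coord_indep_commute: "coord_indep S T U \<Longrightarrow> coord_indep T S U"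
  unfolding coord_indep_def by (rule cond_indep_commute)

lemma coord_indep_mono:
  assumes "S' \<subseteq> S" and "S \<subseteq> nodes" and "coord_indep S T U"
  shows "coord_indep S' T U"
  using cond_indep_mono_left[OF coord_sigma_mono[OF assms(1,2)]] assms(3)
  unfolding coord_indep_def .

lemma coord_indep_empty: "T \<subseteq> nodes \<Longrightarrow> U \<subseteq> nodes \<Longrightarrow> coord_indep {} T U"
  using coord_indep_iff_cond_exp_ignores[of "{}" T U] unfolding cond_exp_ignores_def by auto

lemma coord_indep_Un_determined:
  assumes S: "S \<subseteq> nodes" and S': "S' \<subseteq> nodes" and T: "T \<subseteq> nodes" and U: "U \<subseteq> nodes"
    and determined: "sets (coord_sigma S') \<subseteq> sets (coord_sigma (S \<union> U))"
    and indep: "coord_indep S T U"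
  shows "coord_indep (S \<union> S') T U"
proof -
  have "sets (coord_sigma ((S \<union> U) \<union> S')) = sets (coord_sigma (S \<union> U))"
    using coord_sigma_Un_le[of "S \<union> U" S' "coord_sigma (S \<union> U)"]
      coord_sigma_mono[of "S \<union> U" "(S \<union> U) \<union> S'"] S S' U determined
    by auto
  moreover have "(S \<union> U) \<union> S' = (S \<union> S') \<union> U" by auto
  ultimately have "real_cond_exp \<Omega> (coord_sigma ((S \<union> S') \<union> U)) = real_cond_exp \<Omega> (coord_sigma (S \<union> U))"
    by (intro ext real_cond_exp_cong_sets) simp_all
  then show ?thesis
    using indep S S' T U coord_indep_iff_cond_exp_ignores unfolding cond_exp_ignores_def by auto
qed

lemma coord_indep_contraction:
  assumes S: "S \<subseteq> nodes" and S': "S' \<subseteq> nodes" and T: "T \<subseteq> nodes" and U: "U \<subseteq> nodes"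
    and indep: "coord_indep S T U" and indep': "coord_indep S' T (U \<union> S)"
  shows "coord_indep (S \<union> S') T U"
proof -
  have "cond_exp_ignores (S \<union> S') T U"
    unfolding cond_exp_ignores_def
  proof
    fix b assume b: "b \<in> sets (coord_sigma T)"
    let ?e = "\<lambda>F. real_cond_exp \<Omega> F (indicator b)"
    have "S' \<union> (U \<union> S) = (S \<union> S') \<union> U" "U \<union> S = S \<union> U" by auto
    then have "AE \<omega> in \<Omega>. ?e (coord_sigma ((S \<union> S') \<union> U)) \<omega> = ?e (coord_sigma (S \<union> U)) \<omega>"
      using indep' b S S' T U coord_indep_iff_cond_exp_ignores[of S' T "U \<union> S"]
      unfolding cond_exp_ignores_def by auto
    moreover have "AE \<omega> in \<Omega>. ?e (coord_sigma (S \<union> U)) \<omega> = ?e (coord_sigma U) \<omega>"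
      using indep b S T U coord_indep_iff_cond_exp_ignores unfolding cond_exp_ignores_def by auto
    ultimately show "AE \<omega> in \<Omega>. ?e (coord_sigma ((S \<union> S') \<union> U)) \<omega> = ?e (coord_sigma U) \<omega>"
      by eventually_elim simp
  qed
  then show ?thesis using coord_indep_iff_cond_exp_ignores S S' T U by auto
qed

lemma coord_indep_weak_union:
  assumes S: "S \<subseteq> nodes" and S': "S' \<subseteq> nodes" and T: "T \<subseteq> nodes" and U: "U \<subseteq> nodes"
    and indep: "coord_indep (S \<union> S') T U"
  shows "coord_indep S T (U \<union> S')"
proof -
  let ?W = "S \<union> (U \<union> S')"
  have W: "?W \<subseteq> nodes" and US': "U \<union> S' \<subseteq> nodes" using S S' U by auto
  interpret US': sigma_finite_subalgebra \<Omega> "coord_sigma (U \<union> S')"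
    using sigma_finite_subalgebra_if_subalgebra[OF coord_sigma_subalgebra[OF US']] .
  interpret U: sigma_finite_subalgebra \<Omega> "coord_sigma U"
    using sigma_finite_subalgebra_if_subalgebra[OF coord_sigma_subalgebra[OF U]] .
  have "cond_exp_ignores S T (U \<union> S')"
    unfolding cond_exp_ignores_def
  proof
    fix b assume b: "b \<in> sets (coord_sigma T)"
    let ?e = "\<lambda>F. real_cond_exp \<Omega> F (indicator b)"
    have "b \<in> events" using b coord_sigma_subalgebra[OF T] by (auto simp: subalgebra_def)
    then have int_b: "integrable \<Omega> (indicator b :: _ \<Rightarrow> real)" by (rule integrable_indicator_real)
    have "(S \<union> S') \<union> U = ?W" by auto
    then have W_U: "AE \<omega> in \<Omega>. ?e (coord_sigma ?W) \<omega> = ?e (coord_sigma U) \<omega>"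
      using indep b coord_indep_iff_cond_exp_ignores S S' T U unfolding cond_exp_ignores_def by auto
    have "subalgebra (coord_sigma ?W) (coord_sigma (U \<union> S'))"
      using coord_sigma_mono[of "U \<union> S'" ?W] W by (auto simp: subalgebra_def)
    then have tower: "AE \<omega> in \<Omega>. real_cond_exp \<Omega> (coord_sigma (U \<union> S')) (?e (coord_sigma ?W)) \<omega> =
        ?e (coord_sigma (U \<union> S')) \<omega>"
      by (rule US'.real_cond_exp_nested_subalg[OF coord_sigma_subalgebra[OF W] _ int_b])
    have "AE \<omega> in \<Omega>. real_cond_exp \<Omega> (coord_sigma (U \<union> S')) (?e (coord_sigma ?W)) \<omega> =
        real_cond_exp \<Omega> (coord_sigma (U \<union> S')) (?e (coord_sigma U)) \<omega>"
      by (rule US'.real_cond_exp_cong[OF W_U]) auto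
    moreover have "?e (coord_sigma U) \<in> borel_measurable (coord_sigma (U \<union> S'))"
      using measurable_mono[of borel borel "coord_sigma U" "coord_sigma (U \<union> S')"]
        coord_sigma_mono[of U "U \<union> S'"] US' borel_measurable_cond_exp[of \<Omega> "coord_sigma U" "indicator b"]
      by auto
    then have "AE \<omega> in \<Omega>. real_cond_exp \<Omega> (coord_sigma (U \<union> S')) (?e (coord_sigma U)) \<omega> =
        ?e (coord_sigma U) \<omega>"
      by (rule US'.real_cond_exp_F_meas[OF U.real_cond_exp_int(1)[OF int_b]])
    ultimately show "AE \<omega> in \<Omega>. ?e (coord_sigma (S \<union> (U \<union> S'))) \<omega> = ?e (coord_sigma (U \<union> S')) \<omega>"
      using W_U tower by eventually_elim simp
  qed
  then show ?thesis using coord_indep_iff_cond_exp_ignores S S' T U by auto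
qed

lemma cond_exp_indicator_eq_prob:
  assumes X: "X \<subseteq> W" and W: "W \<subseteq> nodes" and b: "b \<in> events"
    and indep: "\<And>d. d \<in> sets (coord_sigma W) \<Longrightarrow> prob (b \<inter> d) = prob b * prob d"
  shows "AE \<omega> in \<Omega>. real_cond_exp \<Omega> (coord_sigma X) (indicator b) \<omega> = prob b"
proof -
  have X_nodes: "X \<subseteq> nodes" using X W by auto
  interpret X: sigma_finite_subalgebra \<Omega> "coord_sigma X"
    using sigma_finite_subalgebra_if_subalgebra[OF coord_sigma_subalgebra[OF X_nodes]] .
  show ?thesis
  proof (rule X.real_cond_exp_charact)
    fix A assume A: "A \<in> sets (coord_sigma X)"
    have A_W: "A \<in> sets (coord_sigma W)" using A coord_sigma_mono[OF X W] by auto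
    have A_events: "A \<in> events" using A coord_sigma_subalgebra[OF X_nodes] by (auto simp: subalgebra_def)
    have "(\<integral>x\<in>A. indicator b x \<partial>\<Omega>) = (\<integral>x. indicator (b \<inter> A) x \<partial>\<Omega>)"
      unfolding set_lebesgue_integral_def
      by (rule Bochner_Integration.integral_cong) (auto simp: indicator_def)
    also have "\<dots> = prob b * prob A" using A_events b indep[OF A_W] by simp
    also have "\<dots> = (\<integral>x\<in>A. prob b \<partial>\<Omega>)"
      using A_events by (simp add: set_lebesgue_integral_def)
    finally show "(\<integral>x\<in>A. indicator b x \<partial>\<Omega>) = (\<integral>x\<in>A. prob b \<partial>\<Omega>)" .
  qed (auto simp: integrable_indicator_real b)
qed

lemma coord_indep_if_indep:
  assumes S: "S \<subseteq> nodes" and T: "T \<subseteq> nodes" and U: "U \<subseteq> nodes" and W: "W \<subseteq> nodes"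
    and SUW: "S \<union> U \<subseteq> W"
    and indep: "\<And>b d. b \<in> sets (coord_sigma T) \<Longrightarrow> d \<in> sets (coord_sigma W) \<Longrightarrow>
      prob (b \<inter> d) = prob b * prob d"
  shows "coord_indep S T U"
proof -
  have "cond_exp_ignores S T U"
    unfolding cond_exp_ignores_def
  proof
    fix b assume b: "b \<in> sets (coord_sigma T)"
    have "b \<in> events" using b coord_sigma_subalgebra[OF T] by (auto simp: subalgebra_def)
    then have const: "AE \<omega> in \<Omega>. real_cond_exp \<Omega> (coord_sigma X) (indicator b) \<omega> = prob b"
      if "X \<subseteq> W" for X
      using cond_exp_indicator_eq_prob[OF that W] indep[OF b] by blast
    have "S \<union> U \<subseteq> W" "U \<subseteq> W" using SUW by auto
    from const[OF this(1)] const[OF this(2)]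
    show "AE \<omega> in \<Omega>. real_cond_exp \<Omega> (coord_sigma (S \<union> U)) (indicator b) \<omega> =
        real_cond_exp \<Omega> (coord_sigma U) (indicator b) \<omega>"
      by eventually_elim simp
  qed
  then show ?thesis using coord_indep_iff_cond_exp_ignores S T U by auto
qed

end

section \<open>The global Markov property\<close>

context componentwise_system
begin

definition noise_sigma :: "'v set set \<Rightarrow> 'w measure" where
  "noise_sigma R = vimage_algebra (space \<Omega>) (\<lambda>\<omega>. restrict (\<lambda>G. Ev G \<omega>) R) (PiM R N)"

lemma space_noise_sigma [simp]: "space (noise_sigma R) = space \<Omega>"
  by (simp add: noise_sigma_def)

lemma noise_map_space:
  assumes "R \<subseteq> maxfaces H"
  shows "(\<lambda>\<omega>. restrict (\<lambda>G. Ev G \<omega>) R) \<in> space \<Omega> \<rightarrow> space (PiM R N)"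
proof -
  have "(\<lambda>\<omega>. restrict (\<lambda>G. Ev G \<omega>) R) \<in> measurable \<Omega> (PiM R N)"
    using assms by (intro measurable_restrict Ev_measurable) auto
  then show ?thesis by (auto dest: measurable_space)
qed

lemma Ev_measurable_noise_sigma:
  assumes R: "R \<subseteq> maxfaces H" and G: "G \<in> R"
  shows "Ev G \<in> measurable (noise_sigma R) (N G)"
  using measurable_compose[OF measurable_vimage_algebra1[OF noise_map_space[OF R]]
      measurable_component_singleton[OF G]] G
  unfolding noise_sigma_def by simp

lemma coord_sigma_le_noise_sigma:
  assumes S: "S \<subseteq> nodes" and anc: "ancestral S"
  shows "sets (coord_sigma S) \<subseteq> sets (noise_sigma (noise_nodes S))"
proof (subst coord_sigma_le_iff[OF S space_noise_sigma], safe)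
  show noise: "Ev G \<in> measurable (noise_sigma (noise_nodes S)) (N G)" if "G \<in> noise_nodes S" for G
    using Ev_measurable_noise_sigma[OF noise_nodes_subset[OF S] that] .
  fix v assume v: "v \<in> var_nodes S"
  show "(\<lambda>\<omega>. Y \<omega> v) \<in> measurable (noise_sigma (noise_nodes S)) (M v)"
  proof (rule Y_measurable_ancestral[OF _ anc])
    show "Ev G \<in> measurable (noise_sigma (noise_nodes S)) (N G)" if "Inr G \<in> S" for G
      using noise that by (simp add: noise_nodes_def)
    show "Inl v \<in> S" "v \<in> V" using v var_nodes_subset[OF S] by (auto simp: var_nodes_def)
  qed simp
qed

lemma indep_noise_sigma:
  assumes R: "R \<subseteq> maxfaces H" and R': "R' \<subseteq> maxfaces H" and disj: "R \<inter> R' = {}"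
    and b: "b \<in> sets (noise_sigma R)" and d: "d \<in> sets (noise_sigma R')"
  shows "prob (b \<inter> d) = prob b * prob d"
proof -
  let ?f = "\<lambda>\<omega>. restrict (\<lambda>G. Ev G \<omega>) R" and ?f' = "\<lambda>\<omega>. restrict (\<lambda>G. Ev G \<omega>) R'"
  obtain B where B: "B \<in> sets (PiM R N)" "b = ?f -` B \<inter> space \<Omega>"
    using b sets_vimage_algebra2[OF noise_map_space[OF R]] unfolding noise_sigma_def by auto
  obtain B' where B': "B' \<in> sets (PiM R' N)" "d = ?f' -` B' \<inter> space \<Omega>"
    using d sets_vimage_algebra2[OF noise_map_space[OF R']] unfolding noise_sigma_def by auto
  have "indep_var (PiM R N) ?f (PiM R' N) ?f'"
    by (rule indep_var_restrict[OF indep_noise disj R R'])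
  then have "prob ((\<lambda>\<omega>. (?f \<omega>, ?f' \<omega>)) -` (B \<times> B') \<inter> space \<Omega>) = prob b * prob d"
    using indep_varD B B' by simp
  moreover have "(\<lambda>\<omega>. (?f \<omega>, ?f' \<omega>)) -` (B \<times> B') \<inter> space \<Omega> = b \<inter> d"
    using B(2) B'(2) by auto
  ultimately show ?thesis by simp
qed

lemma ancestral_Inr: "ancestral {Inr F}"
  unfolding ancestral_def
proof (intro ballI allI impI)
  fix x p assume "x \<in> {Inr F}" and "(p, x) \<in> D"
  have "\<exists>v. x = Inl v" using \<open>(p, x) \<in> D\<close> by (cases rule: acag_cases) auto
  then show "p \<in> {Inr F}" using \<open>x \<in> {Inr F}\<close> by auto
qed

lemma indep_noise_ancestral:
  assumes S: "S \<subseteq> nodes" and anc: "ancestral S" and F: "F \<in> maxfaces H" and FS: "Inr F \<notin> S"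
    and b: "b \<in> sets (coord_sigma {Inr F})" and d: "d \<in> sets (coord_sigma S)"
  shows "prob (b \<inter> d) = prob b * prob d"
proof (rule indep_noise_sigma)
  have "{Inr F} \<subseteq> nodes" using F by (simp add: aug_nodes_def)
  then show "b \<in> sets (noise_sigma (noise_nodes {Inr F}))"
    using coord_sigma_le_noise_sigma[OF _ ancestral_Inr] b by blast
  show "d \<in> sets (noise_sigma (noise_nodes S))"
    using coord_sigma_le_noise_sigma[OF S anc] d by blast
  show "noise_nodes {Inr F} \<inter> noise_nodes S = {}"
    using FS by (auto simp: noise_nodes_def)
qed (use F noise_nodes_subset[OF S] in \<open>auto simp: noise_nodes_def\<close>)

text \<open>A new variable node is a function of its parents; a new noise node is independent of
  the whole ancestral set and enters by contraction.\<close>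
lemma coord_indep_insert:
  assumes S: "S \<subseteq> nodes" and anc: "ancestral S" and v: "v \<in> nodes" and vS: "v \<notin> S"
    and A: "A \<subseteq> S" and B: "B \<subseteq> S" and C: "C \<subseteq> S"
    and parents: "\<And>p. (p, v) \<in> D \<Longrightarrow> p \<in> A \<union> C"
    and indep: "coord_indep A B C"
  shows "coord_indep (A \<union> {v}) B C"
proof -
  have nodes: "A \<subseteq> nodes" "B \<subseteq> nodes" "C \<subseteq> nodes" "{v} \<subseteq> nodes" "A \<union> C \<subseteq> nodes"
    using A B C S v by auto
  show ?thesis
  proof (cases v)
    case (Inl u)
    have u: "u \<in> V" using v Inl by (auto simp: aug_nodes_def)
    have "(\<lambda>\<omega>. Y \<omega> u) \<in> measurable (coord_sigma (A \<union> C)) (M u)"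
    proof (rule Y_measurable_if_parents[OF space_coord_sigma u])
      fix x assume "x \<in> scc_parents E u"
      then have "Inl x \<in> A \<union> C" using parents acag_Inl[OF u] Inl by blast
      then show "(\<lambda>\<omega>. Y \<omega> x) \<in> measurable (coord_sigma (A \<union> C)) (M x)"
        by (intro measurable_coord_sigma(1)[OF nodes(5)]) (simp add: var_nodes_def)
    next
      fix G assume "G \<in> scc_faces E H u"
      then have "Inr G \<in> A \<union> C" using parents acag_Inr[OF u] Inl by blast
      then show "Ev G \<in> measurable (coord_sigma (A \<union> C)) (N G)"
        by (intro measurable_coord_sigma(2)[OF nodes(5)]) (simp add: noise_nodes_def)
    qed
    then have "sets (coord_sigma {v}) \<subseteq> sets (coord_sigma (A \<union> C))"
      using Inl by (subst coord_sigma_le_iff[OF nodes(4) space_coord_sigma])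
        (auto simp: var_nodes_def noise_nodes_def)
    then show ?thesis by (rule coord_indep_Un_determined[OF nodes(1,4,2,3) _ indep])
  next
    case (Inr F)
    have F: "F \<in> maxfaces H" using v Inr by (auto simp: aug_nodes_def)
    have "coord_indep B {v} (C \<union> A)"
    proof (rule coord_indep_if_indep[OF nodes(2,4) _ S])
      show "C \<union> A \<subseteq> nodes" "B \<union> (C \<union> A) \<subseteq> S" using nodes A B C by auto
      fix b d assume "b \<in> sets (coord_sigma {v})" "d \<in> sets (coord_sigma S)"
      then show "prob (b \<inter> d) = prob b * prob d"
        using indep_noise_ancestral[OF S anc F] vS Inr by auto
    qed
    then show ?thesis
      by (rule coord_indep_contraction[OF nodes(1,4,2,3) indep coord_indep_commute])
  qed
qed

lemma ancestral_remove_maximal: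
  assumes fin: "finite S" and ne: "S \<noteq> {}" and anc: "ancestral S"
  obtains v where "v \<in> S" and "ancestral (S - {v})" and "\<And>p. (p, v) \<in> D \<Longrightarrow> p \<in> S - {v}"
proof -
  have "Max (rank ` S) \<in> rank ` S" using fin ne by (intro Max_in) auto
  then obtain v where v: "v \<in> S" and v_rank: "rank v = Max (rank ` S)" by auto
  have v_max: "rank x \<le> rank v" if "x \<in> S" for x
    using fin that unfolding v_rank by simp
  have parent_S: "p \<in> S" if "x \<in> S" "(p, x) \<in> D" for p x
    using anc that unfolding ancestral_def by blast
  have "p \<in> S - {v}" if "x \<in> S" "(p, x) \<in> D" for p x
    using parent_S[OF that] rank_less[OF that(2)] v_max[OF that(1)] by auto
  then show ?thesis using that v unfolding ancestral_def by blast
qed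

context
  fixes K L Z :: "('v + 'v set) set"
  assumes K: "K \<subseteq> nodes" and L: "L \<subseteq> nodes" and Z: "Z \<subseteq> nodes"
    and disj: "K \<inter> L = {}" "K \<inter> Z = {}" "L \<inter> Z = {}"
    and K_parents: "\<And>v p. v \<in> K \<Longrightarrow> (p, v) \<in> D \<Longrightarrow> p \<in> K \<union> Z"
    and L_parents: "\<And>v p. v \<in> L \<Longrightarrow> (p, v) \<in> D \<Longrightarrow> p \<in> L \<union> Z"
    and Z_parents: "\<And>v. v \<in> Z \<Longrightarrow>
      (\<forall>p. (p, v) \<in> D \<longrightarrow> p \<in> K \<union> Z) \<or> (\<forall>p. (p, v) \<in> D \<longrightarrow> p \<in> L \<union> Z)"
begin

lemma coord_indep_ancestral_insert:
  assumes S: "S \<subseteq> nodes" and anc: "ancestral S" and v: "v \<in> K \<union> L \<union> Z" and vS: "v \<notin> S"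
    and parents: "\<And>p. (p, v) \<in> D \<Longrightarrow> p \<in> S"
    and indep: "coord_indep (K \<inter> S) (L \<inter> S) (Z \<inter> S)"
  shows "coord_indep (K \<inter> insert v S) (L \<inter> insert v S) (Z \<inter> insert v S)"
proof -
  have v_nodes: "v \<in> nodes" using v K L Z by auto
  have sub: "K \<inter> S \<subseteq> S" "L \<inter> S \<subseteq> S" "Z \<inter> S \<subseteq> S" by auto
  have sub_nodes: "K \<inter> S \<subseteq> nodes" "L \<inter> S \<subseteq> nodes" "Z \<inter> S \<subseteq> nodes" "{v} \<subseteq> nodes"
    using S v_nodes by auto
  note insert = coord_indep_insert[OF S anc v_nodes vS]
  have insert_K: "coord_indep ((K \<inter> S) \<union> {v}) (L \<inter> S) (Z \<inter> S)"
    if "\<forall>p. (p, v) \<in> D \<longrightarrow> p \<in> K \<union> Z"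
    by (rule insert[OF sub _ indep]) (use that parents in auto)
  have insert_L: "coord_indep ((L \<inter> S) \<union> {v}) (K \<inter> S) (Z \<inter> S)"
    if "\<forall>p. (p, v) \<in> D \<longrightarrow> p \<in> L \<union> Z"
    by (rule insert[OF sub(2,1,3) _ coord_indep_commute[OF indep]]) (use that parents in auto)
  consider "v \<in> K" | "v \<in> L" | "v \<in> Z" using v by auto
  then show ?thesis
  proof cases
    case 1
    then have "K \<inter> insert v S = (K \<inter> S) \<union> {v}" "L \<inter> insert v S = L \<inter> S"
      "Z \<inter> insert v S = Z \<inter> S"
      using disj by auto
    then show ?thesis using insert_K K_parents[OF 1] by simp
  next
    case 2
    then have "K \<inter> insert v S = K \<inter> S" "L \<inter> insert v S = (L \<inter> S) \<union> {v}"
      "Z \<inter> insert v S = Z \<inter> S"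
      using disj by auto
    then show ?thesis using coord_indep_commute[OF insert_L] L_parents[OF 2] by simp
  next
    case 3
    then have eqs: "K \<inter> insert v S = K \<inter> S" "L \<inter> insert v S = L \<inter> S"
      "Z \<inter> insert v S = (Z \<inter> S) \<union> {v}"
      using disj by auto
    from Z_parents[OF 3] show ?thesis
    proof
      assume "\<forall>p. (p, v) \<in> D \<longrightarrow> p \<in> K \<union> Z"
      then show ?thesis
        using coord_indep_weak_union[OF sub_nodes(1,4,2,3) insert_K] eqs by simp
    next
      assume "\<forall>p. (p, v) \<in> D \<longrightarrow> p \<in> L \<union> Z"
      then show ?thesis
        using coord_indep_commute[OF coord_indep_weak_union[OF sub_nodes(2,4,1,3) insert_L]] eqs
        by simp
    qed
  qed
qed

lemma coord_indep_ancestral: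
  "finite S \<Longrightarrow> ancestral S \<Longrightarrow> S \<subseteq> K \<union> L \<union> Z \<Longrightarrow> coord_indep (K \<inter> S) (L \<inter> S) (Z \<inter> S)"
proof (induction "card S" arbitrary: S rule: less_induct)
  case less
  show ?case
  proof (cases "S = {}")
    case True
    then show ?thesis using coord_indep_empty by simp
  next
    case False
    then obtain v where v: "v \<in> S" and anc: "ancestral (S - {v})"
      and parents: "\<And>p. (p, v) \<in> D \<Longrightarrow> p \<in> S - {v}"
      using ancestral_remove_maximal less.prems(1,2) by blast
    have "coord_indep (K \<inter> (S - {v})) (L \<inter> (S - {v})) (Z \<inter> (S - {v}))"
      using less.hyps[of "S - {v}"] less.prems card_Diff1_less[OF less.prems(1) v] anc by auto
    moreover have "S - {v} \<subseteq> nodes" "v \<in> K \<union> L \<union> Z" using less.prems(3) v K L Z by auto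
    ultimately have "coord_indep (K \<inter> insert v (S - {v})) (L \<inter> insert v (S - {v}))
        (Z \<inter> insert v (S - {v}))"
      by (intro coord_indep_ancestral_insert[OF _ anc _ _ parents]) auto
    then show ?thesis using v by (simp add: insert_absorb)
  qed
qed

end

lemma coord_indep_if_d_separated:
  assumes A: "A \<subseteq> nodes" and B: "B \<subseteq> nodes" and Z: "Z \<subseteq> nodes"
    and d_sep: "d_separated D A B Z"
  shows "coord_indep A B Z"
proof -
  interpret d_separation D A B Z
    using acag_asym d_sep by unfold_locales
  have rel_nodes: "relevant \<subseteq> nodes"
    unfolding relevant_def using ancestors_of_nodes A B Z by auto
  have Z_rel: "Z \<subseteq> relevant" by (rule subset_relevant) auto
  have parts: "reached \<subseteq> nodes" "unreached \<subseteq> nodes"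
    using rel_nodes unfolding reached_def unreached_def by auto
  have disj: "reached \<inter> unreached = {}" "reached \<inter> Z = {}" "unreached \<inter> Z = {}"
    by (auto simp: reached_def unreached_def)
  have fin: "finite relevant" using rel_nodes finite_nodes finite_subset by blast
  have anc: "ancestral relevant" unfolding ancestral_def using relevant_parent by blast
  have cover: "relevant \<subseteq> reached \<union> unreached \<union> Z" unfolding unreached_def by auto
  have "coord_indep (reached \<inter> relevant) (unreached \<inter> relevant) (Z \<inter> relevant)"
    by (rule coord_indep_ancestral[OF parts Z disj _ _ _ fin anc cover])
      (fact reached_parent unreached_parent Z_parents)+
  moreover have "reached \<inter> relevant = reached" "unreached \<inter> relevant = unreached" "Z \<inter> relevant = Z"
    using Z_rel unfolding reached_def unreached_def by auto
  ultimately have "coord_indep reached unreached Z" by simp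
  have Z_le: "sets (coord_sigma Z) \<subseteq> sets (coord_sigma (X \<union> Z))" if "X \<subseteq> nodes" for X
    using coord_sigma_mono[of Z "X \<union> Z"] that Z by auto
  have nodes_Un: "reached \<union> Z \<subseteq> nodes" "unreached \<union> Z \<subseteq> nodes" using parts Z by auto
  have "coord_indep (reached \<union> Z) unreached Z"
    by (rule coord_indep_Un_determined[OF parts(1) Z parts(2) Z Z_le[OF parts(1)]]) fact
  then have "coord_indep (unreached \<union> Z) (reached \<union> Z) Z"
    by (rule coord_indep_Un_determined[OF parts(2) Z nodes_Un(1) Z Z_le[OF parts(2)]
          coord_indep_commute])
  then have "coord_indep B (reached \<union> Z) Z"
    by (rule coord_indep_mono[OF B_subset nodes_Un(2)])
  then show ?thesis
    by (rule coord_indep_mono[OF A_subset nodes_Un(1) coord_indep_commute])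
qed

definition aug_map :: "'w \<Rightarrow> ('v \<Rightarrow> 'x) \<times> ('v set \<Rightarrow> real)" where
  "aug_map \<omega> = (restrict (Y \<omega>) V, restrict (\<lambda>F. Ev F \<omega>) (maxfaces H))"

abbreviation aug_distr :: "(('v \<Rightarrow> 'x) \<times> ('v set \<Rightarrow> real)) measure" where
  "aug_distr \<equiv> distr \<Omega> (aug_space V H M N) aug_map"

lemma aug_map_measurable: "aug_map \<in> measurable \<Omega> (aug_space V H M N)"
  unfolding aug_map_def aug_space_def
  by (intro measurable_Pair measurable_restrict Y_measurable Ev_measurable)

lemma coord_proj_measurable:
  assumes S: "S \<subseteq> nodes"
  shows "coord_proj S \<in> measurable (aug_space V H M N) (coord_space S)"
  unfolding aug_space_def coord_proj_def var_nodes_def noise_nodes_def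
proof (intro measurable_Pair measurable_restrict)
  fix v assume "v \<in> {v. Inl v \<in> S}"
  then have "v \<in> V" using S by (auto simp: aug_nodes_def)
  then show "(\<lambda>x. fst x v) \<in> measurable (PiM V M \<Otimes>\<^sub>M PiM (maxfaces H) N) (M v)"
    by (rule measurable_compose[OF measurable_fst measurable_component_singleton])
next
  fix F assume "F \<in> {F. Inr F \<in> S}"
  then have "F \<in> maxfaces H" using S by (auto simp: aug_nodes_def)
  then show "(\<lambda>x. snd x F) \<in> measurable (PiM V M \<Otimes>\<^sub>M PiM (maxfaces H) N) (N F)"
    by (rule measurable_compose[OF measurable_snd measurable_component_singleton])
qed

lemma coord_alg_subalgebra:
  assumes S: "S \<subseteq> nodes"
  shows "subalgebra aug_distr (coord_alg M N aug_distr S)"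
proof -
  have proj: "coord_proj S \<in> measurable aug_distr (coord_space S)"
    using coord_proj_measurable[OF S] by simp
  have "coord_proj S \<in> space aug_distr \<rightarrow> space (coord_space S)"
    using measurable_space[OF proj] by blast
  then have "sets (coord_alg M N aug_distr S) = {coord_proj S -` B \<inter> space aug_distr | B. B \<in> sets (coord_space S)}"
    unfolding coord_alg_def var_nodes_def noise_nodes_def by (rule sets_vimage_algebra2)
  then show ?thesis
    unfolding subalgebra_def using measurable_sets[OF proj] by (auto simp: coord_alg_def)
qed

lemma coord_sigma_eq_vimage_coord_alg:
  assumes S: "S \<subseteq> nodes"
  shows "coord_sigma S = vimage_algebra (space \<Omega>) aug_map (coord_alg M N aug_distr S)"
proof -
  have "aug_map \<in> space \<Omega> \<rightarrow> space aug_distr"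
    using measurable_space[OF aug_map_measurable] by simp
  moreover have "coord_proj S \<in> space aug_distr \<rightarrow> space (coord_space S)"
    using measurable_space[OF coord_proj_measurable[OF S]] by simp
  ultimately have "vimage_algebra (space \<Omega>) aug_map (coord_alg M N aug_distr S) =
      vimage_algebra (space \<Omega>) (\<lambda>\<omega>. coord_proj S (aug_map \<omega>)) (coord_space S)"
    unfolding coord_alg_def var_nodes_def noise_nodes_def by (rule vimage_algebra_vimage_algebra_eq)
  also have "\<dots> = coord_sigma S"
    unfolding coord_sigma_def
  proof (rule vimage_algebra_cong)
    fix \<omega> assume "\<omega> \<in> space \<Omega>"
    show "coord_proj S (aug_map \<omega>) = coord_map S \<omega>"
      using var_nodes_subset[OF S] noise_nodes_subset[OF S]
      unfolding coord_proj_def aug_map_def coord_map_def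
      by (auto simp: var_nodes_def noise_nodes_def restrict_def fun_eq_iff)
  qed simp_all
  finally show ?thesis by simp
qed

lemma aug_distr_cond_indep_if_d_separated:
  assumes A: "A \<subseteq> nodes" and B: "B \<subseteq> nodes" and Z: "Z \<subseteq> nodes"
    and d_sep: "d_separated D A B Z"
  shows "cond_indep aug_distr (coord_alg M N aug_distr A) (coord_alg M N aug_distr B)
    (coord_alg M N aug_distr Z)"
  by (rule cond_indep_distr[OF aug_map_measurable coord_alg_subalgebra[OF A]
        coord_alg_subalgebra[OF B] coord_alg_subalgebra[OF Z]])
    (use coord_indep_if_d_separated[OF assms] in
      \<open>simp add: coord_indep_def coord_sigma_eq_vimage_coord_alg[OF A]
        coord_sigma_eq_vimage_coord_alg[OF B] coord_sigma_eq_vimage_coord_alg[OF Z]\<close>)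

lemma smgdGMP_aug_distr:
  assumes "\<forall>F\<in>maxfaces H. standard_borel (N F)"
  shows "smgdGMP V E H M (distr \<Omega> (PiM V M) (\<lambda>\<omega>. restrict (Y \<omega>) V))"
  unfolding smgdGMP_def
proof (intro exI[of _ N] exI[of _ aug_distr] conjI allI impI)
  show "prob_space aug_distr" by (rule prob_space_distr[OF aug_map_measurable])
  have "distr aug_distr (PiM V M) fst = distr \<Omega> (PiM V M) (fst \<circ> aug_map)"
    by (rule distr_distr[OF _ aug_map_measurable]) (simp add: aug_space_def)
  then show "distr aug_distr (PiM V M) fst = distr \<Omega> (PiM V M) (\<lambda>\<omega>. restrict (Y \<omega>) V)"
    by (simp add: aug_map_def comp_def)
qed (use assms aug_distr_cond_indep_if_d_separated in auto)

end

lemma componentwise_system_solve_iter: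
  assumes prob: "prob_space \<Omega>" and hedg: "HEDG V E H"
    and indep: "prob_space.indep_vars \<Omega> N Ev (maxfaces H)"
    and g: "\<And>v. v \<in> V \<Longrightarrow>
      g v \<in> measurable (PiM (scc_parents E v) M \<Otimes>\<^sub>M PiM (scc_faces E H v) N) (M v)"
  shows "componentwise_system \<Omega> V E H M N Ev
    (\<lambda>\<omega>. solve_iter E H g (\<lambda>F. Ev F \<omega>) (Suc (card V))) g"
proof (intro componentwise_system.intro[OF prob] componentwise_system_axioms.intro hedg indep g)
  have "finite V" "E \<subseteq> V \<times> V" using hedg by (auto simp: HEDG_def)
  then show "solves_componentwise V E H g (\<lambda>F. Ev F \<omega>)
      (solve_iter E H g (\<lambda>F. Ev F \<omega>) (Suc (card V)))" for \<omega>
    by (rule solves_componentwise_solve_iter)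
qed

text \<open>The everywhere solution Y agrees almost surely with the solution provided by csSEP,
  hence has the same law.\<close>
lemma csSEP_obtains_componentwise_system:
  fixes V :: "'v set" and H :: "'v set set" and M :: "'v \<Rightarrow> 'x measure"
  assumes hedg: "HEDG V E H" and "csSEP TYPE('w) V E H M P"
  obtains \<Omega> :: "'w measure" and N Ev Y g
  where "componentwise_system \<Omega> V E H M N Ev Y g"
    and "\<forall>F\<in>maxfaces H. standard_borel (N F)"
    and "distr \<Omega> (\<Pi>\<^sub>M v\<in>V. M v) (\<lambda>\<omega>. restrict (Y \<omega>) V) = P"
proof -
  obtain \<Omega> :: "'w measure" and N :: "'v set \<Rightarrow> real measure"
    and Ev :: "'v set \<Rightarrow> 'w \<Rightarrow> real" and Xr :: "'v \<Rightarrow> 'w \<Rightarrow> 'x"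
    and g :: "'v \<Rightarrow> ('v \<Rightarrow> 'x) \<times> ('v set \<Rightarrow> real) \<Rightarrow> 'x"
    where prob: "prob_space \<Omega>" and noise_borel: "\<forall>F\<in>maxfaces H. standard_borel (N F)"
      and indep: "prob_space.indep_vars \<Omega> N Ev (maxfaces H)"
      and Xr_measurable: "\<forall>v\<in>V. Xr v \<in> measurable \<Omega> (M v)"
      and P_eq: "distr \<Omega> (\<Pi>\<^sub>M v\<in>V. M v) (\<lambda>\<omega>. restrict (\<lambda>v. Xr v \<omega>) V) = P"
      and g_measurable: "\<forall>v\<in>V. g v \<in> measurable
          ((\<Pi>\<^sub>M u\<in>scc_parents E v. M u) \<Otimes>\<^sub>M (\<Pi>\<^sub>M F\<in>scc_faces E H v. N F)) (M v)"
      and Xr_eq: "\<forall>v\<in>V. AE \<omega> in \<Omega>. Xr v \<omega> =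
          g v (restrict (\<lambda>u. Xr u \<omega>) (scc_parents E v), restrict (\<lambda>F. Ev F \<omega>) (scc_faces E H v))"
    using assms(2) unfolding csSEP_def scc_parents_def scc_faces_def by blast
  have V: "finite V" and E: "E \<subseteq> V \<times> V" using hedg by (auto simp: HEDG_def)
  define Y where "Y \<omega> = solve_iter E H g (\<lambda>F. Ev F \<omega>) (Suc (card V))" for \<omega>
  interpret componentwise_system \<Omega> V E H M N Ev Y g
    unfolding Y_def using componentwise_system_solve_iter prob hedg indep g_measurable by blast
  have "AE \<omega> in \<Omega>. solves_componentwise V E H g (\<lambda>F. Ev F \<omega>) (\<lambda>v. Xr v \<omega>)"
    using Xr_eq by (simp add: solves_componentwise_def AE_finite_all[OF V])
  then have "AE \<omega> in \<Omega>. restrict (Y \<omega>) V = restrict (\<lambda>v. Xr v \<omega>) V"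
    using AE_space
  proof eventually_elim
    case (elim \<omega>)
    show ?case by (rule solves_componentwise_unique[OF V E Y_solves[OF elim(2)] elim(1)])
  qed
  then have "distr \<Omega> (\<Pi>\<^sub>M v\<in>V. M v) (\<lambda>\<omega>. restrict (Y \<omega>) V) = P"
    unfolding P_eq[symmetric] using Y_measurable Xr_measurable
    by (intro distr_cong_AE) (auto intro!: measurable_restrict)
  then show ?thesis using that componentwise_system_axioms noise_borel by blast
qed

theorem mainTheorem1:
  fixes V :: "'v set" and E :: "('v \<times> 'v) set" and H :: "'v set set"
    and M :: "'v \<Rightarrow> 'x measure" and P :: "('v \<Rightarrow> 'x) measure"
  assumes "HEDG V E H"
    and "\<forall>v\<in>V. standard_borel (M v)"
    and "prob_space P" and "sets P = sets (\<Pi>\<^sub>M v\<in>V. M v)"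
    and "csSEP TYPE('w) V E H M P"
  shows "smgdGMP V E H M P"
proof -
  obtain \<Omega> :: "'w measure" and N Ev Y g
    where system: "componentwise_system \<Omega> V E H M N Ev Y g"
      and noise_borel: "\<forall>F\<in>maxfaces H. standard_borel (N F)"
      and law: "distr \<Omega> (\<Pi>\<^sub>M v\<in>V. M v) (\<lambda>\<omega>. restrict (Y \<omega>) V) = P"
    using csSEP_obtains_componentwise_system[OF assms(1,5)] .
  show ?thesis
    using componentwise_system.smgdGMP_aug_distr[OF system noise_borel] law by simp
qed

end
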